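(* Let $\{\hat f_n\}_{n\in\mathbb N}\subset L_0(\hat\nabla,\hat\mu)$ with representing sections $\omega\mapsto f_n(\omega)$. (1) If $\hat f_n\xrightarrow{(o)}\hat f$ in $L_0(\hat\nabla,\hat\mu)$ for some $\hat f\in L_0(\hat\nabla,\hat\mu)$ (with representing section $\omega\mapsto f(\omega)$), then $f_n(\omega)\xrightarrow{(o)} f(\omega)$ in $L_0(\nabla_\omega,\mu_\omega)$ for $\lambda$-almost every $\omega\in\Omega$. (2) Conversely, if for $\lambda$-almost every $\omega\in\Omega$ there is $g(\omega)\in L_0(\nabla_\omega,\mu_\omega)$ with $f_n(\omega)\xrightarrow{(o)} g(\omega)$ in $L_0(\nabla_\omega,\mu_\omega)$, then the section $\omega\mapsto g(\omega)$ defines an element $\hat g\in L_0(\hat\nabla,\hat\mu)$ and $\hat f_n\xrightarrow{(o)}\hat g$ in $L_0(\hat\nabla,\hat\mu)$.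
   Context: $(\Omega,\Sigma,\lambda)$ is a measure space with finite measure $\lambda$; $L_0(\Omega)$ is the algebra of (classes of a.e. equal) measurable real functions on $\Omega$. For each $\omega\in\Omega$, $\nabla_\omega$ is a complete Boolean algebra carrying a strictly positive finite real-valued measure $\mu_\omega$. The assignment $\omega\mapsto\nabla_\omega$ together with a set $L$ of sections forms a measurable bundle of Boolean algebras over $\Omega$. $\hat\nabla$ denotes the complete Boolean algebra of classes (modulo a.e. equality) of measurable sections $\omega\mapsto e(\omega)\in\nabla_\omega$, and $\hat\mu:\hat\nabla\to L_0(\Omega)$ is the strictly positive $L_0(\Omega)$-valued measure $\hat\mu(\hat e)=$ class of $\omega\mapsto\mu_\omega(e(\omega))$. $L_0(\hat\nabla,\hat\mu)$ is the order complete vector lattice $C_\infty(Q(\hat\nabla))$, and $L_0(\nabla_\omega,\mu_\omega)$ the usual space of measurable functions over $(\nabla_\omega,\mu_\omega)$ with metric $\rho_\omega(a,b)=\int\frac{|a-b|}{1+|a-b|}d\mu_\omega$. It is known that $L_0(\hat\nabla,\hat\mu)$ is identified with the space of classes (mod a.e. equality) of measurable sections $\omega\mapsto f(\omega)\in L_0(\nabla_\omega,\mu_\omega)$ (a.e. $\rho_\omega$-limits of step sections); under this identification $\hat f\le\hat g$ iff $f(\omega)\le g(\omega)$ a.e. In a vector lattice, a sequence $x_n$ is $(o)$-convergent to $x$ (order convergence) if there is a sequence $y_n\downarrow 0$ with $|x_n-x|\le y_n$ for all $n$; in $L_0(\nabla_\omega,\mu_\omega)$ this coincides with $\mu_\omega$-a.e.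 convergence. *)

theory Defs
  imports "HOL-Analysis.Analysis"
begin

text \<open>Fibres: each complete Boolean algebra with a strictly positive finite measure
  (nabla_w, mu_w) is represented as the measure algebra of a finite measure space N w
  (measurable sets modulo null sets); L_0(nabla_w, mu_w) is then the space of real
  Borel functions on N w modulo N w-a.e. equality.\<close>

definition fib_rho :: "'x measure \<Rightarrow> 'x set \<Rightarrow> 'x set \<Rightarrow> real" where
  "fib_rho \<nu> a b = measure \<nu> ((a - b) \<union> (b - a))"

definition fib_rho0 :: "'x measure \<Rightarrow> ('x \<Rightarrow> real) \<Rightarrow> ('x \<Rightarrow> real) \<Rightarrow> real" where
  "fib_rho0 \<nu> a b = (\<integral>x. \<bar>a x - b x\<bar> / (1 + \<bar>a x - b x\<bar>) \<partial>\<nu>)"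

definition meas_bundle :: "'w measure \<Rightarrow> ('w \<Rightarrow> 'x measure) \<Rightarrow> ('w \<Rightarrow> 'x set) set \<Rightarrow> bool" where
  "meas_bundle M N L \<longleftrightarrow>
     finite_measure M \<and>
     (\<forall>\<omega>\<in>space M. finite_measure (N \<omega>)) \<and>
     L \<noteq> {} \<and>
     (\<forall>e\<in>L. \<forall>\<omega>\<in>space M. e \<omega> \<in> sets (N \<omega>)) \<and>
     (\<forall>e\<in>L. (\<lambda>\<omega>. measure (N \<omega>) (e \<omega>)) \<in> borel_measurable M) \<and>
     (\<forall>e\<in>L. \<exists>d\<in>L. \<forall>\<omega>\<in>space M. d \<omega> = space (N \<omega>) - e \<omega>) \<and>
     (\<forall>e\<in>L. \<forall>e'\<in>L. \<exists>d\<in>L. \<forall>\<omega>\<in>space M. d \<omega> = e \<omega> \<union> e' \<omega>) \<and>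
     (\<forall>\<omega>\<in>space M. \<forall>a\<in>sets (N \<omega>). \<forall>\<epsilon>>0. \<exists>e\<in>L. fib_rho (N \<omega>) a (e \<omega>) < \<epsilon>)"

definition step_sec :: "'w measure \<Rightarrow> ('w \<Rightarrow> 'x measure) \<Rightarrow> ('w \<Rightarrow> 'x set) set \<Rightarrow> ('w \<Rightarrow> 'x set) \<Rightarrow> bool" where
  "step_sec M N L s \<longleftrightarrow>
     (\<exists>(n::nat) A e. (\<forall>i<n. A i \<in> sets M \<and> e i \<in> L) \<and> disjoint_family_on A {..<n} \<and>
        (\<forall>\<omega>\<in>space M. s \<omega> = (\<Union>i<n. if \<omega> \<in> A i then e i \<omega> else {})))"

text \<open>Measurable sections of the bundle (representatives of elements of hat nabla).\<close>
definition meas_sec :: "'w measure \<Rightarrow> ('w \<Rightarrow> 'x measure) \<Rightarrow> ('w \<Rightarrow> 'x set) set \<Rightarrow> ('w \<Rightarrow> 'x set) \<Rightarrow> bool" where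
  "meas_sec M N L e \<longleftrightarrow>
     (AE \<omega> in M. e \<omega> \<in> sets (N \<omega>)) \<and>
     (\<exists>s. (\<forall>k. step_sec M N L (s k)) \<and>
          (AE \<omega> in M. (\<lambda>k. fib_rho (N \<omega>) (s k \<omega>) (e \<omega>)) \<longlonglongrightarrow> 0))"

definition L0_step_sec :: "'w measure \<Rightarrow> ('w \<Rightarrow> 'x measure) \<Rightarrow> ('w \<Rightarrow> 'x set) set \<Rightarrow> ('w \<Rightarrow> 'x \<Rightarrow> real) \<Rightarrow> bool" where
  "L0_step_sec M N L s \<longleftrightarrow>
     (\<exists>(n::nat) c e. (\<forall>i<n. meas_sec M N L (e i)) \<and>
        (\<forall>\<omega>\<in>space M. s \<omega> = (\<lambda>x. \<Sum>i<n. (c i :: real) * indicator (e i \<omega>) x)))"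

text \<open>Measurable sections omega |-> f(omega) in L_0(nabla_omega, mu_omega): a.e. rho_omega-limits
  of step sections.  Their classes modulo a.e. equality form L_0(hat nabla, hat mu).\<close>
definition L0_meas_sec :: "'w measure \<Rightarrow> ('w \<Rightarrow> 'x measure) \<Rightarrow> ('w \<Rightarrow> 'x set) set \<Rightarrow> ('w \<Rightarrow> 'x \<Rightarrow> real) \<Rightarrow> bool" where
  "L0_meas_sec M N L f \<longleftrightarrow>
     (AE \<omega> in M. f \<omega> \<in> borel_measurable (N \<omega>)) \<and>
     (\<exists>s. (\<forall>k. L0_step_sec M N L (s k)) \<and>
          (AE \<omega> in M. (\<lambda>k. fib_rho0 (N \<omega>) (s k \<omega>) (f \<omega>)) \<longlonglongrightarrow> 0))"

definition fib_oconv :: "'x measure \<Rightarrow> (nat \<Rightarrow> 'x \<Rightarrow> real) \<Rightarrow> ('x \<Rightarrow> real) \<Rightarrow> bool" where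
  "fib_oconv \<nu> fs f \<longleftrightarrow>
     (\<exists>y. (\<forall>n. y n \<in> borel_measurable \<nu>) \<and>
          (\<forall>n. AE x in \<nu>. y (Suc n) x \<le> y n x) \<and>
          (\<forall>k\<in>borel_measurable \<nu>. (\<forall>n. AE x in \<nu>. k x \<le> y n x) \<longrightarrow> (AE x in \<nu>. k x \<le> 0)) \<and>
          (\<forall>n. AE x in \<nu>. \<bar>fs n x - f x\<bar> \<le> y n x))"

text \<open>(o)-convergence in L_0(hat nabla, hat mu), realised as classes of measurable sections with
  hat f <= hat g iff f(omega) <= g(omega) for a.e. omega.\<close>
definition hat_oconv :: "'w measure \<Rightarrow> ('w \<Rightarrow> 'x measure) \<Rightarrow> ('w \<Rightarrow> 'x set) set \<Rightarrow>
    (nat \<Rightarrow> 'w \<Rightarrow> 'x \<Rightarrow> real) \<Rightarrow> ('w \<Rightarrow> 'x \<Rightarrow> real) \<Rightarrow> bool" where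
  "hat_oconv M N L fs f \<longleftrightarrow>
     (\<exists>y. (\<forall>n. L0_meas_sec M N L (y n)) \<and>
          (\<forall>n. AE \<omega> in M. AE x in N \<omega>. y (Suc n) \<omega> x \<le> y n \<omega> x) \<and>
          (\<forall>k. L0_meas_sec M N L k \<longrightarrow> (\<forall>n. AE \<omega> in M. AE x in N \<omega>. k \<omega> x \<le> y n \<omega> x) \<longrightarrow>
               (AE \<omega> in M. AE x in N \<omega>. k \<omega> x \<le> 0)) \<and>
          (\<forall>n. AE \<omega> in M. AE x in N \<omega>. \<bar>fs n \<omega> x - f \<omega> x\<bar> \<le> y n \<omega> x))"

end

theory Submission
  imports Defs
begin

(* The key fact is that L_0(hat nabla) is closed under fibrewise almost-everywhere
   limits: if measurable sections F_n satisfy F_n(omega) -> G(omega) mu_omega-a.e. for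
   lambda-a.e. omega, then G is a measurable section.  For a step section s the function
   omega |-> rho_omega(s(omega), F_n(omega)) is measurable, because on the atoms generated by
   finitely many measurable sections rho_omega is a finite combination of the measurable
   functions omega |-> mu_omega(atom).  Therefore the approximating step sections of the F_n can
   be chosen along a diagonal that converges to G.  The same atoms show that L_0(hat nabla) is
   closed under 1-Lipschitz operations such as |a - b| and max.

   (1) If |f_n - f| <= y_n with y_n decreasing to 0 in L_0(hat nabla), the fibrewise infimum
   of the y_n is a measurable section below every y_n, hence <= 0; so for a.e. omega the
   y_n(omega) witness order convergence in the fibre.
   (2) Order convergence in a fibre implies a.e. convergence, so g is a measurable section, and
   the tail suprema sup_{m >= n} |f_m - g|, limits of finite maxima, are measurable sections
   decreasing to 0 in L_0(hat nabla) and dominating |f_n - g|. *)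

section \<open>The fibre metrics\<close>

lemma frac_one_plus_mono: "0 \<le> (s::real) \<Longrightarrow> s \<le> t \<Longrightarrow> s / (1 + s) \<le> t / (1 + t)"
  by (simp add: field_simps)

lemma frac_one_plus_subadditive:
  fixes s t :: real
  assumes "0 \<le> s" "0 \<le> t"
  shows "(s + t) / (1 + (s + t)) \<le> s / (1 + s) + t / (1 + t)"
proof -
  have "(s + t) / (1 + (s + t)) = s / (1 + (s + t)) + t / (1 + (s + t))"
    by (simp add: add_divide_distrib)
  also have "\<dots> \<le> s / (1 + s) + t / (1 + t)"
    using assms by (intro add_mono divide_left_mono) auto
  finally show ?thesis .
qed

lemma integrable_fib_rho0_integrand:
  fixes a b :: "'x \<Rightarrow> real"
  assumes "finite_measure \<nu>" "a \<in> borel_measurable \<nu>" "b \<in> borel_measurable \<nu>"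
  shows "integrable \<nu> (\<lambda>x. \<bar>a x - b x\<bar> / (1 + \<bar>a x - b x\<bar>))"
  by (rule finite_measure.integrable_const_bound[OF assms(1), where B=1]) (use assms in auto)

lemma fib_rho0_nonneg: "0 \<le> fib_rho0 \<nu> a b"
  unfolding fib_rho0_def by (rule integral_nonneg_AE) auto

lemma fib_rho0_commute: "fib_rho0 \<nu> a b = fib_rho0 \<nu> b a"
  unfolding fib_rho0_def by (simp add: abs_minus_commute)

lemma fib_rho0_le_add:
  fixes u v a a' b b' :: "'x \<Rightarrow> real"
  assumes \<nu>: "finite_measure \<nu>"
    and meas: "u \<in> borel_measurable \<nu>" "v \<in> borel_measurable \<nu>" "a \<in> borel_measurable \<nu>"
      "a' \<in> borel_measurable \<nu>" "b \<in> borel_measurable \<nu>" "b' \<in> borel_measurable \<nu>"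
    and le: "\<And>x. x \<in> space \<nu> \<Longrightarrow> \<bar>u x - v x\<bar> \<le> \<bar>a x - a' x\<bar> + \<bar>b x - b' x\<bar>"
  shows "fib_rho0 \<nu> u v \<le> fib_rho0 \<nu> a a' + fib_rho0 \<nu> b b'"
proof -
  let ?\<psi> = "\<lambda>t::real. t / (1 + t)"
  have "fib_rho0 \<nu> u v \<le> (\<integral>x. ?\<psi> \<bar>a x - a' x\<bar> + ?\<psi> \<bar>b x - b' x\<bar> \<partial>\<nu>)"
    unfolding fib_rho0_def
  proof (rule integral_mono)
    fix x assume "x \<in> space \<nu>"
    then have "?\<psi> \<bar>u x - v x\<bar> \<le> ?\<psi> (\<bar>a x - a' x\<bar> + \<bar>b x - b' x\<bar>)"
      by (intro frac_one_plus_mono le) auto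
    also have "\<dots> \<le> ?\<psi> \<bar>a x - a' x\<bar> + ?\<psi> \<bar>b x - b' x\<bar>"
      by (intro frac_one_plus_subadditive) auto
    finally show "?\<psi> \<bar>u x - v x\<bar> \<le> ?\<psi> \<bar>a x - a' x\<bar> + ?\<psi> \<bar>b x - b' x\<bar>" .
  qed (use integrable_fib_rho0_integrand[OF \<nu>] meas in auto)
  also have "\<dots> = fib_rho0 \<nu> a a' + fib_rho0 \<nu> b b'"
    unfolding fib_rho0_def using integrable_fib_rho0_integrand[OF \<nu>] meas by simp
  finally show ?thesis .
qed

lemma fib_rho0_triangle:
  fixes a b c :: "'x \<Rightarrow> real"
  assumes "finite_measure \<nu>" "a \<in> borel_measurable \<nu>" "b \<in> borel_measurable \<nu>" "c \<in> borel_measurable \<nu>"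
  shows "fib_rho0 \<nu> a c \<le> fib_rho0 \<nu> a b + fib_rho0 \<nu> b c"
  by (rule fib_rho0_le_add) (use assms in auto)

lemma fib_rho0_tendsto_zero:
  fixes a :: "nat \<Rightarrow> 'x \<Rightarrow> real"
  assumes \<nu>: "finite_measure \<nu>" and meas: "\<And>n. a n \<in> borel_measurable \<nu>" "b \<in> borel_measurable \<nu>"
    and lim: "AE x in \<nu>. (\<lambda>n. a n x) \<longlonglongrightarrow> b x"
  shows "(\<lambda>n. fib_rho0 \<nu> (a n) b) \<longlonglongrightarrow> 0"
proof -
  interpret finite_measure \<nu> by fact
  have "(\<lambda>n. \<integral>x. \<bar>a n x - b x\<bar> / (1 + \<bar>a n x - b x\<bar>) \<partial>\<nu>) \<longlonglongrightarrow> (\<integral>x. 0 \<partial>\<nu>)"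
  proof (rule integral_dominated_convergence[where w="\<lambda>_. 1"])
    show "AE x in \<nu>. (\<lambda>n. \<bar>a n x - b x\<bar> / (1 + \<bar>a n x - b x\<bar>)) \<longlonglongrightarrow> 0"
      using lim
    proof eventually_elim
      case (elim x)
      then have "(\<lambda>n. \<bar>a n x - b x\<bar>) \<longlonglongrightarrow> \<bar>b x - b x\<bar>"
        by (intro tendsto_intros)
      then have "(\<lambda>n. \<bar>a n x - b x\<bar> / (1 + \<bar>a n x - b x\<bar>)) \<longlonglongrightarrow> 0 / (1 + 0)"
        by (intro tendsto_intros) auto
      then show ?case by simp
    qed
  qed (use meas in auto)
  then show ?thesis unfolding fib_rho0_def by simp
qed

lemma fib_rho_nonneg: "0 \<le> fib_rho \<nu> a b"
  unfolding fib_rho_def by simp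

lemma fib_rho_Int_le:
  assumes "finite_measure \<nu>" "a \<in> sets \<nu>" "b \<in> sets \<nu>" "a' \<in> sets \<nu>" "b' \<in> sets \<nu>"
  shows "fib_rho \<nu> (a \<inter> b) (a' \<inter> b') \<le> fib_rho \<nu> a a' + fib_rho \<nu> b b'"
proof -
  interpret finite_measure \<nu> by fact
  have "fib_rho \<nu> (a \<inter> b) (a' \<inter> b') \<le> measure \<nu> (((a - a') \<union> (a' - a)) \<union> ((b - b') \<union> (b' - b)))"
    unfolding fib_rho_def using assms by (intro finite_measure_mono) auto
  also have "\<dots> \<le> fib_rho \<nu> a a' + fib_rho \<nu> b b'"
    unfolding fib_rho_def using assms by (intro measure_Un_le) auto
  finally show ?thesis .
qed

lemma fib_rho_compl_le:
  assumes "finite_measure \<nu>" "a \<in> sets \<nu>" "a' \<in> sets \<nu>"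
  shows "fib_rho \<nu> (space \<nu> - a) (space \<nu> - a') \<le> fib_rho \<nu> a a'"
  unfolding fib_rho_def using assms by (intro finite_measure.finite_measure_mono) auto

lemma abs_measure_diff_le_fib_rho:
  assumes "finite_measure \<nu>" "a \<in> sets \<nu>" "b \<in> sets \<nu>"
  shows "\<bar>measure \<nu> a - measure \<nu> b\<bar> \<le> fib_rho \<nu> a b"
proof -
  interpret finite_measure \<nu> by fact
  have "measure \<nu> a \<le> measure \<nu> b + fib_rho \<nu> a b" "measure \<nu> b \<le> measure \<nu> a + fib_rho \<nu> a b"
    unfolding fib_rho_def using assms
    by (auto intro!: order_trans[OF finite_measure_mono measure_Un_le])
  then show ?thesis by linarith
qed

lemma fib_rho0_tendsto_zero_trans:
  assumes \<nu>: "finite_measure \<nu>" and meas: "\<And>j. a j \<in> borel_measurable \<nu>" "\<And>j. b j \<in> borel_measurable \<nu>"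
    "c \<in> borel_measurable \<nu>"
    and ab: "(\<lambda>j. fib_rho0 \<nu> (a j) (b j)) \<longlonglongrightarrow> 0" and bc: "(\<lambda>j. fib_rho0 \<nu> (b j) c) \<longlonglongrightarrow> 0"
  shows "(\<lambda>j. fib_rho0 \<nu> (a j) c) \<longlonglongrightarrow> 0"
proof (rule Lim_null_comparison[OF always_eventually])
  show "\<forall>j. norm (fib_rho0 \<nu> (a j) c) \<le> fib_rho0 \<nu> (a j) (b j) + fib_rho0 \<nu> (b j) c"
    using fib_rho0_triangle[OF \<nu> meas(1) meas(2) meas(3)] by (simp add: fib_rho0_nonneg)
  show "(\<lambda>j. fib_rho0 \<nu> (a j) (b j) + fib_rho0 \<nu> (b j) c) \<longlonglongrightarrow> 0"
    using tendsto_add[OF ab bc] by simp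
qed

lemma borel_measurable_lipschitz_binop:
  fixes \<Phi> :: "real \<Rightarrow> real \<Rightarrow> real"
  assumes lip: "\<And>a b a' b'. \<bar>\<Phi> a b - \<Phi> a' b'\<bar> \<le> \<bar>a - a'\<bar> + \<bar>b - b'\<bar>"
    and "f \<in> borel_measurable M" "g \<in> borel_measurable M"
  shows "(\<lambda>x. \<Phi> (f x) (g x)) \<in> borel_measurable M"
proof (rule borel_measurable_continuous_Pair[OF assms(2,3)])
  have "2-lipschitz_on UNIV (\<lambda>p. \<Phi> (fst p) (snd p))"
  proof (rule lipschitz_onI)
    fix p q :: "real \<times> real"
    have "dist (\<Phi> (fst p) (snd p)) (\<Phi> (fst q) (snd q)) \<le> dist (fst p) (fst q) + dist (snd p) (snd q)"
      using lip by (simp add: dist_real_def)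
    also have "\<dots> \<le> 2 * dist p q"
      using dist_fst_le[of p q] dist_snd_le[of p q] by simp
    finally show "dist (\<Phi> (fst p) (snd p)) (\<Phi> (fst q) (snd q)) \<le> 2 * dist p q" .
  qed simp
  then show "continuous_on UNIV (\<lambda>p. \<Phi> (fst p) (snd p))"
    by (rule lipschitz_on_continuous_on)
qed

lemma fib_rho0_binop_tendsto_zero:
  fixes \<Phi> :: "real \<Rightarrow> real \<Rightarrow> real"
  assumes \<nu>: "finite_measure \<nu>"
    and meas: "\<And>k. u k \<in> borel_measurable \<nu>" "\<And>k. a k \<in> borel_measurable \<nu>"
      "\<And>k. b k \<in> borel_measurable \<nu>" "f \<in> borel_measurable \<nu>" "g \<in> borel_measurable \<nu>"
    and lip: "\<And>a b a' b'. \<bar>\<Phi> a b - \<Phi> a' b'\<bar> \<le> \<bar>a - a'\<bar> + \<bar>b - b'\<bar>"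
    and u: "\<And>k x. x \<in> space \<nu> \<Longrightarrow> u k x = \<Phi> (a k x) (b k x)"
    and lim: "(\<lambda>k. fib_rho0 \<nu> (a k) f) \<longlonglongrightarrow> 0" "(\<lambda>k. fib_rho0 \<nu> (b k) g) \<longlonglongrightarrow> 0"
  shows "(\<lambda>k. fib_rho0 \<nu> (u k) (\<lambda>x. \<Phi> (f x) (g x))) \<longlonglongrightarrow> 0"
proof (rule Lim_null_comparison[OF always_eventually])
  show "\<forall>k. norm (fib_rho0 \<nu> (u k) (\<lambda>x. \<Phi> (f x) (g x))) \<le> fib_rho0 \<nu> (a k) f + fib_rho0 \<nu> (b k) g"
  proof
    fix k
    have "fib_rho0 \<nu> (u k) (\<lambda>x. \<Phi> (f x) (g x)) \<le> fib_rho0 \<nu> (a k) f + fib_rho0 \<nu> (b k) g"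
      using u lip by (intro fib_rho0_le_add[OF \<nu>] meas borel_measurable_lipschitz_binop[OF lip]) auto
    then show "norm (fib_rho0 \<nu> (u k) (\<lambda>x. \<Phi> (f x) (g x))) \<le> fib_rho0 \<nu> (a k) f + fib_rho0 \<nu> (b k) g"
      by (simp add: fib_rho0_nonneg)
  qed
  show "(\<lambda>k. fib_rho0 \<nu> (a k) f + fib_rho0 \<nu> (b k) g) \<longlonglongrightarrow> 0"
    using tendsto_add[OF lim] by simp
qed

lemma borel_measurable_completion_AE_cong:
  fixes f g :: "'a \<Rightarrow> 'b::topological_space"
  assumes f: "f \<in> borel_measurable (completion M)" and eq: "AE x in M. f x = g x"
  shows "g \<in> borel_measurable (completion M)"
proof (rule measurableI)
  fix A :: "'b set" assume "A \<in> sets borel"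
  then have f_A: "f -` A \<inter> space M \<in> sets (completion M)"
    using f by (auto dest: measurable_sets)
  have "AE x in M. x \<in> f -` A \<inter> space M \<longleftrightarrow> x \<in> g -` A \<inter> space M"
    using eq by eventually_elim simp
  then have "AE x in completion M. x \<in> f -` A \<inter> space M \<longleftrightarrow> x \<in> g -` A \<inter> space M"
    by (rule AE_completion)
  from completion.in_sets_AE[OF this f_A]
  show "g -` A \<inter> space (completion M) \<in> sets (completion M)"
    by simp
qed simp

lemma finite_measure_completion: "finite_measure M \<Longrightarrow> finite_measure (completion M)"
  by (rule finite_measureI) (simp add: finite_measure.emeasure_finite)

lemma borel_measurable_completion_AE_tendsto:
  fixes f :: "nat \<Rightarrow> 'a \<Rightarrow> real"
  assumes "\<And>n. f n \<in> borel_measurable (completion M)"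
    and "AE x in M. (\<lambda>n. f n x) \<longlonglongrightarrow> g x"
  shows "g \<in> borel_measurable (completion M)"
proof (rule borel_measurable_completion_AE_cong)
  show "(\<lambda>x. lim (\<lambda>n. f n x)) \<in> borel_measurable (completion M)"
    using assms(1) by (rule borel_measurable_lim_metric)
  show "AE x in M. lim (\<lambda>n. f n x) = g x"
    using assms(2) by eventually_elim (rule limI)
qed

lemma borel_measurable_SUP_real:
  fixes F :: "'i \<Rightarrow> 'a \<Rightarrow> real"
  assumes "countable I" "\<And>i. i \<in> I \<Longrightarrow> F i \<in> borel_measurable M"
  shows "(\<lambda>x. SUP i\<in>I. F i x) \<in> borel_measurable M"
proof -
  have "(\<lambda>x. - (INF i\<in>I. - F i x)) \<in> borel_measurable M"
    using assms by measurable
  moreover have "(SUP i\<in>I. F i x) = - (INF i\<in>I. - F i x)" for x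
    by (simp add: Inf_real_def image_image)
  ultimately show ?thesis by simp
qed

definition tail_sup :: "(nat \<Rightarrow> real) \<Rightarrow> nat \<Rightarrow> real" where
  "tail_sup d n = (SUP m\<in>{n..}. d m)"

lemma tail_sup_upper: "bdd_above (range d) \<Longrightarrow> n \<le> m \<Longrightarrow> d m \<le> tail_sup d n"
  unfolding tail_sup_def by (rule cSUP_upper) (auto intro: bdd_above_mono)

lemma tail_sup_least: "(\<And>m. n \<le> m \<Longrightarrow> d m \<le> e) \<Longrightarrow> tail_sup d n \<le> e"
  unfolding tail_sup_def by (rule cSUP_least) auto

lemma tail_sup_Suc_le: "bdd_above (range d) \<Longrightarrow> tail_sup d (Suc n) \<le> tail_sup d n"
  by (rule tail_sup_least) (simp add: tail_sup_upper)

lemma Max_window_Suc: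
  "Max (d ` {n..n + Suc K}) = max (d (n + Suc K)) (Max (d ` {n..n + K}))"
proof -
  have "{n..n + Suc K} = insert (n + Suc K) {n..n + K}" by auto
  then show ?thesis by (simp add: Max_insert)
qed

lemma Max_window_tendsto_tail_sup:
  fixes d :: "nat \<Rightarrow> real"
  assumes bdd: "bdd_above (range d)"
  shows "(\<lambda>K. Max (d ` {n..n + K})) \<longlonglongrightarrow> tail_sup d n"
proof -
  let ?W = "\<lambda>K. Max (d ` {n..n + K})"
  have W_le: "?W K \<le> tail_sup d n" for K
    by (simp add: tail_sup_upper[OF bdd])
  have bdd_W: "bdd_above (range ?W)"
    by (rule bdd_aboveI2[where M="tail_sup d n"]) (rule W_le)
  have "incseq ?W"
    by (intro monoI Max_mono) auto
  then have "?W \<longlonglongrightarrow> (SUP K. ?W K)"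
    by (rule LIMSEQ_incseq_SUP[OF bdd_W])
  moreover have "(SUP K. ?W K) = tail_sup d n"
  proof (rule antisym)
    show "(SUP K. ?W K) \<le> tail_sup d n"
      by (intro cSUP_least W_le) simp
    show "tail_sup d n \<le> (SUP K. ?W K)"
    proof (rule tail_sup_least)
      fix m assume "n \<le> m"
      then have "d m \<le> ?W (m - n)" by (intro Max_ge) auto
      also have "\<dots> \<le> (SUP K. ?W K)" by (rule cSUP_upper[OF _ bdd_W]) simp
      finally show "d m \<le> (SUP K. ?W K)" .
    qed
  qed
  ultimately show ?thesis by simp
qed

lemma le_zero_if_le_tail_sup:
  fixes d :: "nat \<Rightarrow> real"
  assumes "d \<longlonglongrightarrow> 0" "\<And>n. k \<le> tail_sup d n"
  shows "k \<le> 0"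
proof (rule field_le_epsilon)
  fix \<epsilon> :: real assume "0 < \<epsilon>"
  with assms(1) have "\<forall>\<^sub>F m in sequentially. d m < \<epsilon>"
    by (auto dest: order_tendstoD(2))
  then obtain n where "\<And>m. n \<le> m \<Longrightarrow> d m < \<epsilon>"
    unfolding eventually_sequentially by blast
  then have "tail_sup d n \<le> \<epsilon>"
    by (intro tail_sup_least less_imp_le)
  with assms(2)[of n] show "k \<le> 0 + \<epsilon>"
    by simp
qed

lemma integral_min_one_abs_tendsto_zero:
  fixes h :: "nat \<Rightarrow> 'a \<Rightarrow> real"
  assumes "finite_measure M" "\<And>k. h k \<in> borel_measurable M" "AE x in M. (\<lambda>k. h k x) \<longlonglongrightarrow> 0"
  shows "(\<lambda>k. \<integral>x. min 1 \<bar>h k x\<bar> \<partial>M) \<longlonglongrightarrow> 0"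
proof -
  interpret finite_measure M by fact
  have "(\<lambda>k. \<integral>x. min 1 \<bar>h k x\<bar> \<partial>M) \<longlonglongrightarrow> (\<integral>x. 0 \<partial>M)"
  proof (rule integral_dominated_convergence[where w="\<lambda>_. 1"])
    show "AE x in M. (\<lambda>k. min 1 \<bar>h k x\<bar>) \<longlonglongrightarrow> 0"
      using assms(3)
    proof eventually_elim
      case (elim x)
      then have "(\<lambda>k. min 1 \<bar>h k x\<bar>) \<longlonglongrightarrow> min 1 \<bar>0\<bar>"
        by (intro tendsto_min tendsto_const tendsto_rabs)
      then show ?case by simp
    qed
  qed (use assms(2) in auto)
  then show ?thesis by simp
qed

lemma tendsto_zero_of_min_one_abs:
  fixes a :: "nat \<Rightarrow> real"
  assumes "(\<lambda>j. min 1 \<bar>a j\<bar>) \<longlonglongrightarrow> 0"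
  shows "a \<longlonglongrightarrow> 0"
proof -
  have "\<forall>\<^sub>F j in sequentially. min 1 \<bar>a j\<bar> < 1"
    using assms by (rule order_tendstoD) simp
  then have "\<forall>\<^sub>F j in sequentially. min 1 \<bar>a j\<bar> = \<bar>a j\<bar>"
    by eventually_elim simp
  with assms have "(\<lambda>j. \<bar>a j\<bar>) \<longlonglongrightarrow> 0"
    by (rule Lim_transform_eventually)
  then show ?thesis by (rule tendsto_rabs_zero_cancel)
qed

text \<open>Choose \<open>\<kappa> n\<close> with \<open>\<integral> min 1 \<bar>h n (\<kappa> n)\<bar> < 1 / Suc n\<close>; this diagonal converges in
  \<open>L\<^sup>1\<close>, hence a.e. along a subsequence.\<close>
lemma AE_tendsto_zero_diagonal:
  fixes h :: "nat \<Rightarrow> nat \<Rightarrow> 'a \<Rightarrow> real"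
  assumes M: "finite_measure M" and meas: "\<And>n k. h n k \<in> borel_measurable M"
    and lim: "\<And>n. AE x in M. (\<lambda>k. h n k x) \<longlonglongrightarrow> 0"
  obtains r \<kappa> where "strict_mono r" "AE x in M. (\<lambda>j. h (r j) (\<kappa> j) x) \<longlonglongrightarrow> 0"
proof -
  interpret finite_measure M by fact
  define q where "q n k x = min 1 \<bar>h n k x\<bar>" for n k x
  have q_integrable: "integrable M (q n k)" for n k
    unfolding q_def using meas by (intro integrable_const_bound[where B=1]) auto
  have "\<forall>\<^sub>F k in sequentially. (\<integral>x. q n k x \<partial>M) < 1 / Suc n" for n
    unfolding q_def using integral_min_one_abs_tendsto_zero[OF M meas lim] by (rule order_tendstoD) simp
  then have "\<exists>k. (\<integral>x. q n k x \<partial>M) < 1 / Suc n" for n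
    by (auto simp: eventually_sequentially)
  then obtain \<kappa> where \<kappa>: "\<And>n. (\<integral>x. q n (\<kappa> n) x \<partial>M) < 1 / Suc n"
    by metis
  have "(\<lambda>n. \<integral>x. norm (q n (\<kappa> n) x) \<partial>M) \<longlonglongrightarrow> 0"
  proof (rule tendsto_sandwich[OF _ _ tendsto_const LIMSEQ_inverse_real_of_nat])
    show "\<forall>\<^sub>F n in sequentially. 0 \<le> (\<integral>x. norm (q n (\<kappa> n) x) \<partial>M)"
      by (simp add: integral_nonneg)
    show "\<forall>\<^sub>F n in sequentially. (\<integral>x. norm (q n (\<kappa> n) x) \<partial>M) \<le> inverse (real (Suc n))"
      using \<kappa> by (intro always_eventually allI) (simp add: q_def inverse_eq_divide less_imp_le)
  qed
  then obtain r where r: "strict_mono r" "AE x in M. (\<lambda>j. q (r j) (\<kappa> (r j)) x) \<longlonglongrightarrow> 0"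
    using tendsto_L1_AE_subseq[of M "\<lambda>n. q n (\<kappa> n)"] q_integrable by auto
  from r(2) have "AE x in M. (\<lambda>j. h (r j) (\<kappa> (r j)) x) \<longlonglongrightarrow> 0"
    unfolding q_def by eventually_elim (rule tendsto_zero_of_min_one_abs)
  then show ?thesis by (rule that[OF r(1), of "\<lambda>j. \<kappa> (r j)"])
qed

lemma UN_if_disjoint_family_on:
  assumes "disjoint_family_on A I" "j \<in> I" "\<omega> \<in> A j"
  shows "(\<Union>i\<in>I. if \<omega> \<in> A i then E i else {}) = E j"
proof -
  have "\<omega> \<notin> A i" if "i \<in> I" "i \<noteq> j" for i
    using assms that unfolding disjoint_family_on_def by blast
  then show ?thesis using assms(2,3) by (auto split: if_splits)
qed

definition pattern :: "'i set \<Rightarrow> ('i \<Rightarrow> 'w \<Rightarrow> 'x set) \<Rightarrow> 'w \<Rightarrow> 'x \<Rightarrow> 'i set" where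
  "pattern I e \<omega> x = {i \<in> I. x \<in> e i \<omega>}"

lemma AE_AE_mono:
  assumes "AE \<omega> in M. AE x in N \<omega>. P \<omega> x" "\<And>\<omega> x. P \<omega> x \<Longrightarrow> Q \<omega> x"
  shows "AE \<omega> in M. AE x in N \<omega>. Q \<omega> x"
  using assms(1) by (rule eventually_mono) (erule eventually_mono, erule assms(2))

lemma decseq_nonneg_INF:
  fixes d :: "nat \<Rightarrow> real"
  assumes "\<And>n. d (Suc n) \<le> d n" "\<And>n. 0 \<le> d n"
  shows "d \<longlonglongrightarrow> (INF n. d n)" "(INF n. d n) \<le> d n" "(\<And>n. k \<le> d n) \<Longrightarrow> k \<le> (INF n. d n)"
proof -
  have bdd: "bdd_below (range d)"
    using assms(2) by (intro bdd_belowI2)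
  show "d \<longlonglongrightarrow> (INF n. d n)"
    using assms(1) by (intro LIMSEQ_decseq_INF bdd decseq_SucI)
  show "(INF n. d n) \<le> d n"
    using bdd by (rule cINF_lower) simp
  show "(\<And>n. k \<le> d n) \<Longrightarrow> k \<le> (INF n. d n)"
    by (rule cINF_greatest) auto
qed

lemma fib_oconv_AE_tendsto:
  fixes fs :: "nat \<Rightarrow> 'x \<Rightarrow> real"
  assumes "fib_oconv \<nu> fs g"
  shows "AE x in \<nu>. (\<lambda>n. fs n x) \<longlonglongrightarrow> g x"
proof -
  obtain y where y_meas: "\<forall>n. y n \<in> borel_measurable \<nu>"
    and y_dec: "\<forall>n. AE x in \<nu>. y (Suc n) x \<le> y n x"
    and y_inf: "\<forall>k\<in>borel_measurable \<nu>. (\<forall>n. AE x in \<nu>. k x \<le> y n x) \<longrightarrow> (AE x in \<nu>. k x \<le> 0)"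
    and y_dom: "\<forall>n. AE x in \<nu>. \<bar>fs n x - g x\<bar> \<le> y n x"
    using assms unfolding fib_oconv_def by blast
  have "AE x in \<nu>. \<forall>n. y (Suc n) x \<le> y n x \<and> \<bar>fs n x - g x\<bar> \<le> y n x"
    using y_dec y_dom by (simp add: AE_all_countable AE_conj_iff)
  then have y: "AE x in \<nu>. \<forall>n. y (Suc n) x \<le> y n x \<and> 0 \<le> y n x \<and> \<bar>fs n x - g x\<bar> \<le> y n x"
    by eventually_elim (meson abs_ge_zero order_trans)
  have "(\<lambda>x. INF n. y n x) \<in> borel_measurable \<nu>"
    using y_meas by (intro borel_measurable_cINF_real) auto
  moreover have "\<forall>n. AE x in \<nu>. (INF n. y n x) \<le> y n x"
    using y by (auto intro: decseq_nonneg_INF(2) elim: eventually_mono)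
  ultimately have "AE x in \<nu>. (INF n. y n x) \<le> 0"
    by (rule y_inf[THEN bspec, THEN mp])
  with y show ?thesis
  proof eventually_elim
    case (elim x)
    then have dec: "\<And>n. y (Suc n) x \<le> y n x" "\<And>n. 0 \<le> y n x"
      by auto
    have "0 \<le> (INF n. y n x)"
      by (rule decseq_nonneg_INF(3)[where d="\<lambda>n. y n x", OF dec dec(2)])
    with elim have "(INF n. y n x) = 0"
      by (intro antisym) auto
    with decseq_nonneg_INF(1)[where d="\<lambda>n. y n x", OF dec] have "(\<lambda>n. y n x) \<longlonglongrightarrow> 0"
      by simp
    then have "(\<lambda>n. fs n x - g x) \<longlonglongrightarrow> 0"
      by (rule Lim_null_comparison[OF always_eventually, rotated]) (use elim in auto)
    then show ?case
      by (rule LIM_zero_cancel)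
  qed
qed

lemma fib_oconvI:
  fixes fs :: "nat \<Rightarrow> 'x \<Rightarrow> real"
  assumes meas: "\<And>n. y n \<in> borel_measurable \<nu>"
    and dec: "AE x in \<nu>. \<forall>n. y (Suc n) x \<le> y n x \<and> \<bar>fs n x - f x\<bar> \<le> y n x"
    and inf: "AE x in \<nu>. (INF n. y n x) \<le> 0"
  shows "fib_oconv \<nu> fs f"
  unfolding fib_oconv_def
proof (intro exI[of _ y] conjI ballI allI impI)
  show "AE x in \<nu>. y (Suc n) x \<le> y n x" "AE x in \<nu>. \<bar>fs n x - f x\<bar> \<le> y n x" for n
    using dec by (auto elim: eventually_mono)
  fix k assume "\<forall>n. AE x in \<nu>. k x \<le> y n x"
  then have "AE x in \<nu>. \<forall>n. k x \<le> y n x"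
    by (simp add: AE_all_countable)
  with dec inf show "AE x in \<nu>. k x \<le> 0"
  proof eventually_elim
    case (elim x)
    then have "k x \<le> (INF n. y n x)"
      by (intro decseq_nonneg_INF(3)) (auto intro: order_trans[OF abs_ge_zero])
    with elim show ?case by simp
  qed
qed (rule meas)

section \<open>Step sections of a measurable bundle\<close>

locale measurable_bundle =
  fixes M :: "'w measure" and N :: "'w \<Rightarrow> 'x measure" and L :: "('w \<Rightarrow> 'x set) set"
  assumes meas_bundle: "meas_bundle M N L"
begin

lemma finite_measure_base: "finite_measure M"
  using meas_bundle unfolding meas_bundle_def by (elim conjE)

lemma finite_measure_fibre: "\<omega> \<in> space M \<Longrightarrow> finite_measure (N \<omega>)"
  using meas_bundle unfolding meas_bundle_def by (elim conjE) simp

lemma L_sets: "e \<in> L \<Longrightarrow> \<omega> \<in> space M \<Longrightarrow> e \<omega> \<in> sets (N \<omega>)"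
  using meas_bundle unfolding meas_bundle_def by (elim conjE) simp

lemma L_measure_measurable: "e \<in> L \<Longrightarrow> (\<lambda>\<omega>. measure (N \<omega>) (e \<omega>)) \<in> borel_measurable M"
  using meas_bundle unfolding meas_bundle_def by (elim conjE) simp

lemma L_compl: "e \<in> L \<Longrightarrow> \<exists>d\<in>L. \<forall>\<omega>\<in>space M. d \<omega> = space (N \<omega>) - e \<omega>"
  using meas_bundle unfolding meas_bundle_def by (elim conjE) simp

lemma L_Un: "e \<in> L \<Longrightarrow> e' \<in> L \<Longrightarrow> \<exists>d\<in>L. \<forall>\<omega>\<in>space M. d \<omega> = e \<omega> \<union> e' \<omega>"
  using meas_bundle unfolding meas_bundle_def by (elim conjE) simp

lemma L_nonempty: "L \<noteq> {}"
  using meas_bundle unfolding meas_bundle_def by (elim conjE)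

lemma L_Int:
  assumes "e \<in> L" "e' \<in> L"
  shows "\<exists>d\<in>L. \<forall>\<omega>\<in>space M. d \<omega> = e \<omega> \<inter> e' \<omega>"
proof -
  obtain c c' where "c \<in> L" "c' \<in> L"
    and c: "\<forall>\<omega>\<in>space M. c \<omega> = space (N \<omega>) - e \<omega> \<and> c' \<omega> = space (N \<omega>) - e' \<omega>"
    using L_compl assms by metis
  then obtain u where "u \<in> L" and u: "\<forall>\<omega>\<in>space M. u \<omega> = c \<omega> \<union> c' \<omega>"
    using L_Un by blast
  then obtain d where "d \<in> L" and d: "\<forall>\<omega>\<in>space M. d \<omega> = space (N \<omega>) - u \<omega>"
    using L_compl by blast
  have "d \<omega> = e \<omega> \<inter> e' \<omega>" if "\<omega> \<in> space M" for \<omega>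
    using that c u d L_sets[OF assms(1)] L_sets[OF assms(2)] sets.sets_into_space by fastforce
  with \<open>d \<in> L\<close> show ?thesis by blast
qed

lemma L_space_empty:
  "\<exists>d\<in>L. \<forall>\<omega>\<in>space M. d \<omega> = space (N \<omega>)" "\<exists>d\<in>L. \<forall>\<omega>\<in>space M. d \<omega> = {}"
proof -
  obtain e where "e \<in> L"
    using L_nonempty by blast
  then obtain c where "c \<in> L" and c: "\<forall>\<omega>\<in>space M. c \<omega> = space (N \<omega>) - e \<omega>"
    using L_compl by blast
  obtain u where "u \<in> L" and u: "\<forall>\<omega>\<in>space M. u \<omega> = e \<omega> \<union> c \<omega>"
    using L_Un[OF \<open>e \<in> L\<close> \<open>c \<in> L\<close>] by blast
  have u_space: "u \<omega> = space (N \<omega>)" if "\<omega> \<in> space M" for \<omega>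
  proof -
    have "e \<omega> \<subseteq> space (N \<omega>)"
      using L_sets[OF \<open>e \<in> L\<close> that] by (rule sets.sets_into_space)
    then show ?thesis using u c that by auto
  qed
  with \<open>u \<in> L\<close> show "\<exists>d\<in>L. \<forall>\<omega>\<in>space M. d \<omega> = space (N \<omega>)" by blast
  moreover obtain d where "d \<in> L" and "\<forall>\<omega>\<in>space M. d \<omega> = space (N \<omega>) - u \<omega>"
    using L_compl[OF \<open>u \<in> L\<close>] by blast
  ultimately show "\<exists>d\<in>L. \<forall>\<omega>\<in>space M. d \<omega> = {}"
    using u_space by auto
qed

text \<open>Unlike in \<^const>\<open>step_sec\<close>, the pieces here cover the base, so that complements
  and intersections of step sections can be computed piece by piece.\<close>
definition step_repr :: "'i set \<Rightarrow> ('i \<Rightarrow> 'w set) \<Rightarrow> ('i \<Rightarrow> 'w \<Rightarrow> 'x set) \<Rightarrow> ('w \<Rightarrow> 'x set) \<Rightarrow> bool" where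
  "step_repr I A e s \<longleftrightarrow> finite I \<and> (\<forall>i\<in>I. A i \<in> sets M \<and> e i \<in> L) \<and> disjoint_family_on A I \<and>
     (\<forall>\<omega>\<in>space M. \<exists>i\<in>I. \<omega> \<in> A i) \<and> (\<forall>i\<in>I. \<forall>\<omega>\<in>space M. \<omega> \<in> A i \<longrightarrow> s \<omega> = e i \<omega>)"

lemma step_repr_imp_step_sec:
  assumes "step_repr I A e s"
  shows "step_sec M N L s"
proof -
  from assms have I: "finite I" and Ae: "\<forall>i\<in>I. A i \<in> sets M \<and> e i \<in> L"
    and disj: "disjoint_family_on A I" and cover: "\<forall>\<omega>\<in>space M. \<exists>i\<in>I. \<omega> \<in> A i"
    and s: "\<forall>i\<in>I. \<forall>\<omega>\<in>space M. \<omega> \<in> A i \<longrightarrow> s \<omega> = e i \<omega>"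
    unfolding step_repr_def by simp_all
  obtain \<beta> where \<beta>: "bij_betw \<beta> {..<card I} I"
    using ex_bij_betw_nat_finite[OF I] by (auto simp: atLeast0LessThan)
  have \<beta>_I: "\<beta> j \<in> I" if "j < card I" for j
    using bij_betw_apply[OF \<beta>] that by simp
  have disj': "disjoint_family_on (A \<circ> \<beta>) {..<card I}"
    unfolding disjoint_family_on_def
  proof (intro ballI impI)
    fix j k assume "j \<in> {..<card I}" "k \<in> {..<card I}" "j \<noteq> k"
    moreover from this have "\<beta> j \<noteq> \<beta> k"
      using inj_on_eq_iff[OF bij_betw_imp_inj_on[OF \<beta>]] by blast
    ultimately show "(A \<circ> \<beta>) j \<inter> (A \<circ> \<beta>) k = {}"
      using disj \<beta>_I unfolding disjoint_family_on_def by simp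
  qed
  have "s \<omega> = (\<Union>j<card I. if \<omega> \<in> (A \<circ> \<beta>) j then (e \<circ> \<beta>) j \<omega> else {})" if \<omega>: "\<omega> \<in> space M" for \<omega>
  proof -
    obtain i where "i \<in> I" "\<omega> \<in> A i"
      using cover \<omega> by blast
    moreover from \<open>i \<in> I\<close> obtain j where "j < card I" "i = \<beta> j"
      using bij_betw_imp_surj_on[OF \<beta>] by blast
    ultimately show ?thesis
      using UN_if_disjoint_family_on[OF disj', of j \<omega> "\<lambda>j. e (\<beta> j) \<omega>"] s \<omega> by simp
  qed
  then show ?thesis
    unfolding step_sec_def using Ae \<beta>_I disj'
    by (intro exI[of _ "card I"] exI[of _ "A \<circ> \<beta>"] exI[of _ "e \<circ> \<beta>"] conjI allI impI ballI) auto
qed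

lemma step_sec_imp_step_repr:
  assumes "step_sec M N L s"
  obtains I :: "nat set" and A e where "step_repr I A e s"
proof -
  obtain n :: nat and A e where Ae: "\<forall>i<n. A i \<in> sets M \<and> e i \<in> L" and disj: "disjoint_family_on A {..<n}"
    and s: "\<forall>\<omega>\<in>space M. s \<omega> = (\<Union>i<n. if \<omega> \<in> A i then e i \<omega> else {})"
    using assms unfolding step_sec_def by blast
  obtain z where "z \<in> L" and z: "\<forall>\<omega>\<in>space M. z \<omega> = {}"
    using L_space_empty by blast
  define A' where "A' = A(n := space M - (\<Union>i<n. A i))"
  define e' where "e' = e(n := z)"
  have "step_repr {..n} A' e' s"
    unfolding step_repr_def
  proof (intro conjI ballI impI)
    show "A' i \<in> sets M" "e' i \<in> L" if "i \<in> {..n}" for i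
      using that Ae \<open>z \<in> L\<close> unfolding A'_def e'_def by (cases "i = n"; auto)+
    show "disjoint_family_on A' {..n}"
      using disj unfolding disjoint_family_on_def A'_def by auto
    show "\<exists>i\<in>{..n}. \<omega> \<in> A' i" if "\<omega> \<in> space M" for \<omega>
      using that unfolding A'_def by (cases "\<exists>i<n. \<omega> \<in> A i") auto
    show "s \<omega> = e' i \<omega>" if i: "i \<in> {..n}" and \<omega>: "\<omega> \<in> space M" "\<omega> \<in> A' i" for i \<omega>
    proof (cases "i = n")
      case True
      then have "\<forall>j<n. \<omega> \<notin> A j" using \<omega> unfolding A'_def by auto
      then show ?thesis using True s z \<omega> unfolding e'_def by auto
    next
      case False
      then have "i < n" "\<omega> \<in> A i" using i \<omega> unfolding A'_def by auto
      then show ?thesis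
        using UN_if_disjoint_family_on[OF disj, of i \<omega> "\<lambda>j. e j \<omega>"] s \<omega> False
        unfolding e'_def by simp
    qed
  qed simp
  then show ?thesis by (rule that)
qed

lemma step_sec_sets:
  assumes "step_sec M N L s" "\<omega> \<in> space M"
  shows "s \<omega> \<in> sets (N \<omega>)"
proof -
  obtain I :: "nat set" and A e where "step_repr I A e s"
    using assms(1) by (rule step_sec_imp_step_repr)
  moreover from this obtain i where "i \<in> I" "\<omega> \<in> A i"
    using assms(2) unfolding step_repr_def by blast
  ultimately show ?thesis
    using L_sets assms(2) unfolding step_repr_def by auto
qed

lemma step_sec_measure_measurable:
  assumes "step_sec M N L s"
  shows "(\<lambda>\<omega>. measure (N \<omega>) (s \<omega>)) \<in> borel_measurable M"
proof -
  obtain I :: "nat set" and A e where repr: "step_repr I A e s"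
    using assms by (rule step_sec_imp_step_repr)
  then have I: "finite I" and Ae: "\<forall>i\<in>I. A i \<in> sets M \<and> e i \<in> L"
    and disj: "disjoint_family_on A I" and cover: "\<forall>\<omega>\<in>space M. \<exists>i\<in>I. \<omega> \<in> A i"
    and s: "\<forall>i\<in>I. \<forall>\<omega>\<in>space M. \<omega> \<in> A i \<longrightarrow> s \<omega> = e i \<omega>"
    unfolding step_repr_def by simp_all
  have "measure (N \<omega>) (s \<omega>) = (\<Sum>i\<in>I. measure (N \<omega>) (e i \<omega>) * indicator (A i) \<omega>)"
    if \<omega>: "\<omega> \<in> space M" for \<omega>
  proof -
    obtain j where "j \<in> I" "\<omega> \<in> A j"
      using cover \<omega> by blast
    then show ?thesis
      using sum_indicator_disjoint_family[OF disj _ I, of \<omega> j "\<lambda>i. measure (N \<omega>) (e i \<omega>)"] s \<omega>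
      by simp
  qed
  moreover have "(\<lambda>\<omega>. \<Sum>i\<in>I. measure (N \<omega>) (e i \<omega>) * indicator (A i) \<omega>) \<in> borel_measurable M"
    using Ae L_measure_measurable by (intro borel_measurable_sum borel_measurable_times borel_measurable_indicator) auto
  ultimately show ?thesis
    by (subst measurable_cong) auto
qed

lemma step_sec_space: "step_sec M N L (\<lambda>\<omega>. space (N \<omega>))"
proof -
  obtain d where "d \<in> L" "\<forall>\<omega>\<in>space M. d \<omega> = space (N \<omega>)"
    using L_space_empty by blast
  then have "step_repr {()} (\<lambda>_. space M) (\<lambda>_. d) (\<lambda>\<omega>. space (N \<omega>))"
    unfolding step_repr_def disjoint_family_on_def by auto
  then show ?thesis by (rule step_repr_imp_step_sec)
qed

lemma step_sec_compl:
  assumes "step_sec M N L s"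
  shows "step_sec M N L (\<lambda>\<omega>. space (N \<omega>) - s \<omega>)"
proof -
  obtain I :: "nat set" and A e where repr: "step_repr I A e s"
    using assms by (rule step_sec_imp_step_repr)
  have "\<exists>c\<in>L. \<forall>\<omega>\<in>space M. c \<omega> = space (N \<omega>) - e i \<omega>" if "i \<in> I" for i
    using repr that L_compl unfolding step_repr_def by blast
  then obtain c where c: "\<And>i. i \<in> I \<Longrightarrow> c i \<in> L \<and> (\<forall>\<omega>\<in>space M. c i \<omega> = space (N \<omega>) - e i \<omega>)"
    by metis
  have "step_repr I A c (\<lambda>\<omega>. space (N \<omega>) - s \<omega>)"
    using repr c unfolding step_repr_def by auto
  then show ?thesis by (rule step_repr_imp_step_sec)
qed

lemma step_sec_Int:
  assumes "step_sec M N L s" "step_sec M N L t"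
  shows "step_sec M N L (\<lambda>\<omega>. s \<omega> \<inter> t \<omega>)"
proof -
  obtain I :: "nat set" and A e where s: "step_repr I A e s"
    using assms(1) by (rule step_sec_imp_step_repr)
  obtain J :: "nat set" and B e' where t: "step_repr J B e' t"
    using assms(2) by (rule step_sec_imp_step_repr)
  have "\<exists>c\<in>L. \<forall>\<omega>\<in>space M. c \<omega> = e (fst ij) \<omega> \<inter> e' (snd ij) \<omega>" if "ij \<in> I \<times> J" for ij
    using s t that L_Int unfolding step_repr_def by (auto simp: mem_Times_iff)
  then obtain c where c: "\<And>ij. ij \<in> I \<times> J \<Longrightarrow>
      c ij \<in> L \<and> (\<forall>\<omega>\<in>space M. c ij \<omega> = e (fst ij) \<omega> \<inter> e' (snd ij) \<omega>)"
    by metis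
  have "step_repr (I \<times> J) (\<lambda>ij. A (fst ij) \<inter> B (snd ij)) c (\<lambda>\<omega>. s \<omega> \<inter> t \<omega>)"
    unfolding step_repr_def
  proof (intro conjI ballI impI)
    show "finite (I \<times> J)"
      using s t unfolding step_repr_def by simp
    show "A (fst ij) \<inter> B (snd ij) \<in> sets M" "c ij \<in> L" if "ij \<in> I \<times> J" for ij
      using s t c that unfolding step_repr_def by (auto simp: mem_Times_iff)
    show "disjoint_family_on (\<lambda>ij. A (fst ij) \<inter> B (snd ij)) (I \<times> J)"
      using s t unfolding step_repr_def disjoint_family_on_def by (auto simp: prod_eq_iff; blast)
    show "\<exists>ij\<in>I \<times> J. \<omega> \<in> A (fst ij) \<inter> B (snd ij)" if \<omega>: "\<omega> \<in> space M" for \<omega>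
    proof -
      obtain i j where "i \<in> I" "\<omega> \<in> A i" "j \<in> J" "\<omega> \<in> B j"
        using s t \<omega> unfolding step_repr_def by meson
      then show ?thesis by force
    qed
    show "s \<omega> \<inter> t \<omega> = c ij \<omega>"
      if "ij \<in> I \<times> J" "\<omega> \<in> space M" "\<omega> \<in> A (fst ij) \<inter> B (snd ij)" for ij \<omega>
      using s t c that unfolding step_repr_def by (auto simp: mem_Times_iff)
  qed
  then show ?thesis by (rule step_repr_imp_step_sec)
qed

section \<open>Measurable sections of sets\<close>

lemma meas_sec_step_sec: "step_sec M N L s \<Longrightarrow> meas_sec M N L s"
  unfolding meas_sec_def using step_sec_sets
  by (intro conjI exI[of _ "\<lambda>_. s"] AE_I2) (auto simp: fib_rho_def)

lemma meas_sec_space: "meas_sec M N L (\<lambda>\<omega>. space (N \<omega>))"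
  by (rule meas_sec_step_sec[OF step_sec_space])

lemma meas_sec_compl:
  assumes "meas_sec M N L e"
  shows "meas_sec M N L (\<lambda>\<omega>. space (N \<omega>) - e \<omega>)"
proof -
  obtain s where e_sets: "AE \<omega> in M. e \<omega> \<in> sets (N \<omega>)" and s: "\<And>k. step_sec M N L (s k)"
    and lim: "AE \<omega> in M. (\<lambda>k. fib_rho (N \<omega>) (s k \<omega>) (e \<omega>)) \<longlonglongrightarrow> 0"
    using assms unfolding meas_sec_def by blast
  have "AE \<omega> in M. (\<lambda>k. fib_rho (N \<omega>) (space (N \<omega>) - s k \<omega>) (space (N \<omega>) - e \<omega>)) \<longlonglongrightarrow> 0"
    using AE_space e_sets lim
  proof eventually_elim
    case (elim \<omega>)
    show ?case
    proof (rule Lim_null_comparison[OF always_eventually elim(3)], intro allI)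
      fix k
      show "norm (fib_rho (N \<omega>) (space (N \<omega>) - s k \<omega>) (space (N \<omega>) - e \<omega>)) \<le> fib_rho (N \<omega>) (s k \<omega>) (e \<omega>)"
        using fib_rho_compl_le[OF finite_measure_fibre] step_sec_sets[OF s] elim
        by (simp add: fib_rho_nonneg)
    qed
  qed
  then show ?thesis
    unfolding meas_sec_def using e_sets step_sec_compl[OF s]
    by (intro conjI exI[of _ "\<lambda>k \<omega>. space (N \<omega>) - s k \<omega>"]) (auto elim: AE_mp)
qed

lemma meas_sec_Int:
  assumes "meas_sec M N L e" "meas_sec M N L e'"
  shows "meas_sec M N L (\<lambda>\<omega>. e \<omega> \<inter> e' \<omega>)"
proof -
  obtain s where e_sets: "AE \<omega> in M. e \<omega> \<in> sets (N \<omega>)" and s: "\<And>k. step_sec M N L (s k)"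
    and lim: "AE \<omega> in M. (\<lambda>k. fib_rho (N \<omega>) (s k \<omega>) (e \<omega>)) \<longlonglongrightarrow> 0"
    using assms(1) unfolding meas_sec_def by blast
  obtain s' where e'_sets: "AE \<omega> in M. e' \<omega> \<in> sets (N \<omega>)" and s': "\<And>k. step_sec M N L (s' k)"
    and lim': "AE \<omega> in M. (\<lambda>k. fib_rho (N \<omega>) (s' k \<omega>) (e' \<omega>)) \<longlonglongrightarrow> 0"
    using assms(2) unfolding meas_sec_def by blast
  have "AE \<omega> in M. (\<lambda>k. fib_rho (N \<omega>) (s k \<omega> \<inter> s' k \<omega>) (e \<omega> \<inter> e' \<omega>)) \<longlonglongrightarrow> 0"
    using AE_space e_sets e'_sets lim lim'
  proof eventually_elim
    case (elim \<omega>)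
    have "(\<lambda>k. fib_rho (N \<omega>) (s k \<omega>) (e \<omega>) + fib_rho (N \<omega>) (s' k \<omega>) (e' \<omega>)) \<longlonglongrightarrow> 0 + 0"
      using elim by (intro tendsto_add)
    then have "(\<lambda>k. fib_rho (N \<omega>) (s k \<omega>) (e \<omega>) + fib_rho (N \<omega>) (s' k \<omega>) (e' \<omega>)) \<longlonglongrightarrow> 0"
      by simp
    then show ?case
    proof (rule Lim_null_comparison[OF always_eventually, rotated], intro allI)
      fix k
      show "norm (fib_rho (N \<omega>) (s k \<omega> \<inter> s' k \<omega>) (e \<omega> \<inter> e' \<omega>))
          \<le> fib_rho (N \<omega>) (s k \<omega>) (e \<omega>) + fib_rho (N \<omega>) (s' k \<omega>) (e' \<omega>)"
        using fib_rho_Int_le[OF finite_measure_fibre] step_sec_sets[OF s] step_sec_sets[OF s'] elim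
        by (simp add: fib_rho_nonneg)
    qed
  qed
  then show ?thesis
    unfolding meas_sec_def using e_sets e'_sets step_sec_Int[OF s s']
    by (intro conjI exI[of _ "\<lambda>k \<omega>. s k \<omega> \<inter> s' k \<omega>"]) (auto elim: AE_mp)
qed

lemma meas_sec_INT:
  assumes "finite I" "\<And>i. i \<in> I \<Longrightarrow> meas_sec M N L (e i)"
  shows "meas_sec M N L (\<lambda>\<omega>. space (N \<omega>) \<inter> (\<Inter>i\<in>I. e i \<omega>))"
  using assms
proof (induction I rule: finite_induct)
  case empty
  then show ?case using meas_sec_space by simp
next
  case (insert i I)
  have "meas_sec M N L (\<lambda>\<omega>. e i \<omega> \<inter> (space (N \<omega>) \<inter> (\<Inter>i\<in>I. e i \<omega>)))"
    by (rule meas_sec_Int) (use insert in auto)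
  moreover have "(\<lambda>\<omega>. e i \<omega> \<inter> (space (N \<omega>) \<inter> (\<Inter>i\<in>I. e i \<omega>))) =
      (\<lambda>\<omega>. space (N \<omega>) \<inter> (\<Inter>i\<in>insert i I. e i \<omega>))"
    by auto
  ultimately show ?case by simp
qed

lemma AE_meas_sec_sets:
  assumes "finite I" "\<And>i. i \<in> I \<Longrightarrow> meas_sec M N L (e i)"
  shows "AE \<omega> in M. \<forall>i\<in>I. e i \<omega> \<in> sets (N \<omega>)"
  using assms unfolding meas_sec_def by (subst AE_finite_all) auto

text \<open>Functions of \<open>\<omega>\<close> built from measurable sections are determined only up to null sets;
  their measurability is therefore stated with respect to the completion of the base measure.\<close>
lemma meas_sec_measure_measurable:
  assumes "meas_sec M N L e"
  shows "(\<lambda>\<omega>. measure (N \<omega>) (e \<omega>)) \<in> borel_measurable (completion M)"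
proof -
  obtain s where e_sets: "AE \<omega> in M. e \<omega> \<in> sets (N \<omega>)" and s: "\<And>k. step_sec M N L (s k)"
    and lim: "AE \<omega> in M. (\<lambda>k. fib_rho (N \<omega>) (s k \<omega>) (e \<omega>)) \<longlonglongrightarrow> 0"
    using assms unfolding meas_sec_def by blast
  show ?thesis
  proof (rule borel_measurable_completion_AE_tendsto)
    show "(\<lambda>\<omega>. measure (N \<omega>) (s k \<omega>)) \<in> borel_measurable (completion M)" for k
      by (intro measurable_completion step_sec_measure_measurable s)
    show "AE \<omega> in M. (\<lambda>k. measure (N \<omega>) (s k \<omega>)) \<longlonglongrightarrow> measure (N \<omega>) (e \<omega>)"
      using AE_space e_sets lim
    proof eventually_elim
      case (elim \<omega>)
      show ?case
      proof (rule Lim_null_comparison[OF always_eventually elim(3), THEN LIM_zero_cancel], intro allI)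
        fix k
        show "norm (measure (N \<omega>) (s k \<omega>) - measure (N \<omega>) (e \<omega>)) \<le> fib_rho (N \<omega>) (s k \<omega>) (e \<omega>)"
          using abs_measure_diff_le_fib_rho[OF finite_measure_fibre] step_sec_sets[OF s] elim by simp
      qed
    qed
  qed
qed

section \<open>Measurable sections with values in \<open>L\<^sub>0\<close>\<close>

definition atom :: "'i set \<Rightarrow> ('i \<Rightarrow> 'w \<Rightarrow> 'x set) \<Rightarrow> 'i set \<Rightarrow> 'w \<Rightarrow> 'x set" where
  "atom I e S \<omega> = {x \<in> space (N \<omega>). pattern I e \<omega> x = S}"

lemma atom_eq_INT:
  assumes "S \<subseteq> I"
  shows "atom I e S \<omega> = space (N \<omega>) \<inter> (\<Inter>i\<in>I. if i \<in> S then e i \<omega> else space (N \<omega>) - e i \<omega>)"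
  using assms unfolding atom_def pattern_def by (auto split: if_splits)

lemma atom_sets:
  assumes "S \<subseteq> I" "finite I" "\<And>i. i \<in> I \<Longrightarrow> e i \<omega> \<in> sets (N \<omega>)"
  shows "atom I e S \<omega> \<in> sets (N \<omega>)"
proof -
  have "atom I e S \<omega> = space (N \<omega>) - (\<Union>i\<in>I. space (N \<omega>) - (if i \<in> S then e i \<omega> else space (N \<omega>) - e i \<omega>))"
    unfolding atom_eq_INT[OF assms(1)] by auto
  also have "\<dots> \<in> sets (N \<omega>)"
    using assms(2,3) by (intro sets.Diff sets.finite_UN) auto
  finally show ?thesis .
qed

lemma meas_sec_atom:
  assumes "S \<subseteq> I" "finite I" "\<And>i. i \<in> I \<Longrightarrow> meas_sec M N L (e i)"
  shows "meas_sec M N L (atom I e S)"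
proof -
  have "meas_sec M N L (\<lambda>\<omega>. if i \<in> S then e i \<omega> else space (N \<omega>) - e i \<omega>)" if "i \<in> I" for i
    using assms(3)[OF that] meas_sec_compl by (cases "i \<in> S") auto
  then have "meas_sec M N L (\<lambda>\<omega>. space (N \<omega>) \<inter> (\<Inter>i\<in>I. if i \<in> S then e i \<omega> else space (N \<omega>) - e i \<omega>))"
    using assms(2) by (intro meas_sec_INT)
  moreover have "atom I e S = (\<lambda>\<omega>. space (N \<omega>) \<inter> (\<Inter>i\<in>I. if i \<in> S then e i \<omega> else space (N \<omega>) - e i \<omega>))"
    by (rule ext, rule atom_eq_INT[OF assms(1)])
  ultimately show ?thesis by (simp only:)
qed

lemma sum_indicator_atom:
  assumes "finite I" "x \<in> space (N \<omega>)"
  shows "(\<Sum>S\<in>Pow I. H S * indicator (atom I e S \<omega>) x) = (H (pattern I e \<omega> x) :: real)"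
proof (rule sum_indicator_disjoint_family)
  show "disjoint_family_on (\<lambda>S. atom I e S \<omega>) (Pow I)"
    unfolding disjoint_family_on_def atom_def by auto
qed (use assms in \<open>auto simp: atom_def pattern_def\<close>)

lemma integral_pattern:
  assumes "finite_measure (N \<omega>)" "finite I" "\<And>i. i \<in> I \<Longrightarrow> e i \<omega> \<in> sets (N \<omega>)"
  shows "(\<integral>x. H (pattern I e \<omega> x) \<partial>N \<omega>) = (\<Sum>S\<in>Pow I. (H S :: real) * measure (N \<omega>) (atom I e S \<omega>))"
proof -
  interpret finite_measure "N \<omega>" by fact
  have "(\<integral>x. H (pattern I e \<omega> x) \<partial>N \<omega>) = (\<integral>x. (\<Sum>S\<in>Pow I. H S * indicator (atom I e S \<omega>) x) \<partial>N \<omega>)"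
    by (rule Bochner_Integration.integral_cong[OF refl sum_indicator_atom[symmetric, OF assms(2)]])
  also have "\<dots> = (\<Sum>S\<in>Pow I. \<integral>x. H S * indicator (atom I e S \<omega>) x \<partial>N \<omega>)"
    using assms(2,3) atom_sets[of _ I e \<omega>]
    by (intro Bochner_Integration.integral_sum integrable_mult_right integrable_real_indicator)
      (auto simp: less_top[symmetric])
  also have "\<dots> = (\<Sum>S\<in>Pow I. H S * measure (N \<omega>) (atom I e S \<omega>))"
    by (rule sum.cong) (auto simp: atom_def Int_absorb2)
  finally show ?thesis .
qed

lemma integral_pattern_measurable:
  assumes "finite I" "\<And>i. i \<in> I \<Longrightarrow> meas_sec M N L (e i)"
  shows "(\<lambda>\<omega>. \<integral>x. (H (pattern I e \<omega> x) :: real) \<partial>N \<omega>) \<in> borel_measurable (completion M)"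
proof (rule borel_measurable_completion_AE_cong)
  have sets: "AE \<omega> in M. \<forall>i\<in>I. e i \<omega> \<in> sets (N \<omega>)"
    using assms by (rule AE_meas_sec_sets)
  show "(\<lambda>\<omega>. \<Sum>S\<in>Pow I. H S * measure (N \<omega>) (atom I e S \<omega>)) \<in> borel_measurable (completion M)"
    using assms by (intro borel_measurable_sum borel_measurable_times borel_measurable_const
        meas_sec_measure_measurable meas_sec_atom) auto
  show "AE \<omega> in M. (\<Sum>S\<in>Pow I. H S * measure (N \<omega>) (atom I e S \<omega>)) = (\<integral>x. H (pattern I e \<omega> x) \<partial>N \<omega>)"
    using AE_space sets by eventually_elim (simp add: integral_pattern finite_measure_fibre assms(1))
qed

lemma L0_step_secI:
  fixes c :: "'i \<Rightarrow> real"
  assumes "finite I" "\<And>i. i \<in> I \<Longrightarrow> meas_sec M N L (e i)"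
    and "\<And>\<omega>. \<omega> \<in> space M \<Longrightarrow> s \<omega> = (\<lambda>x. \<Sum>i\<in>I. c i * indicator (e i \<omega>) x)"
  shows "L0_step_sec M N L s"
proof -
  obtain \<beta> where \<beta>: "bij_betw \<beta> {..<card I} I"
    using ex_bij_betw_nat_finite[OF assms(1)] by (auto simp: atLeast0LessThan)
  have "s \<omega> = (\<lambda>x. \<Sum>j<card I. c (\<beta> j) * indicator (e (\<beta> j) \<omega>) x)" if "\<omega> \<in> space M" for \<omega>
    unfolding assms(3)[OF that] by (intro ext) (rule sum.reindex_bij_betw[OF \<beta>, symmetric])
  then show ?thesis
    unfolding L0_step_sec_def using assms(2) bij_betw_apply[OF \<beta>]
    by (intro exI[of _ "card I"] exI[of _ "c \<circ> \<beta>"] exI[of _ "e \<circ> \<beta>"]) auto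
qed

lemma L0_step_sec_pattern:
  assumes "finite I" "\<And>i. i \<in> I \<Longrightarrow> meas_sec M N L (e i)"
  obtains t where "L0_step_sec M N L t"
    "\<And>\<omega> x. \<omega> \<in> space M \<Longrightarrow> x \<in> space (N \<omega>) \<Longrightarrow> t \<omega> x = H (pattern I e \<omega> x)"
proof
  show "L0_step_sec M N L (\<lambda>\<omega> x. \<Sum>S\<in>Pow I. H S * indicator (atom I e S \<omega>) x)"
    using assms by (intro L0_step_secI[where I="Pow I"]) (auto intro!: meas_sec_atom)
qed (rule sum_indicator_atom[OF assms(1)])

lemma L0_step_sec_common_pattern:
  assumes "L0_step_sec M N L s" "L0_step_sec M N L t"
  obtains I :: "(nat + nat) set" and e h1 h2 where "finite I" "\<And>i. i \<in> I \<Longrightarrow> meas_sec M N L (e i)"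
    "\<And>\<omega> x. \<omega> \<in> space M \<Longrightarrow> s \<omega> x = h1 (pattern I e \<omega> x)"
    "\<And>\<omega> x. \<omega> \<in> space M \<Longrightarrow> t \<omega> x = h2 (pattern I e \<omega> x)"
proof -
  obtain n :: nat and c e where e: "\<forall>i<n. meas_sec M N L (e i)"
    and s: "\<forall>\<omega>\<in>space M. s \<omega> = (\<lambda>x. \<Sum>i<n. c i * indicator (e i \<omega>) x)"
    using assms(1) unfolding L0_step_sec_def by blast
  obtain m :: nat and c' e' where e': "\<forall>j<m. meas_sec M N L (e' j)"
    and t: "\<forall>\<omega>\<in>space M. t \<omega> = (\<lambda>x. \<Sum>j<m. c' j * indicator (e' j \<omega>) x)"
    using assms(2) unfolding L0_step_sec_def by blast
  let ?I = "{..<n} <+> {..<m}" and ?e = "case_sum e e'"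
  have "s \<omega> x = (\<Sum>i<n. if Inl i \<in> pattern ?I ?e \<omega> x then c i else 0)"
    "t \<omega> x = (\<Sum>j<m. if Inr j \<in> pattern ?I ?e \<omega> x then c' j else 0)" if "\<omega> \<in> space M" for \<omega> x
    by (simp_all only: s[rule_format, OF that] t[rule_format, OF that])
      (rule sum.cong; auto simp: pattern_def indicator_def)+
  moreover have "meas_sec M N L (?e i)" if "i \<in> ?I" for i
    using that e e' by auto
  ultimately show ?thesis
    by (intro that[of ?I ?e]) auto
qed

lemma AE_L0_step_sec_borel_measurable:
  assumes "L0_step_sec M N L s"
  shows "AE \<omega> in M. s \<omega> \<in> borel_measurable (N \<omega>)"
proof -
  obtain n :: nat and c e where e: "\<forall>i<n. meas_sec M N L (e i)"
    and s: "\<forall>\<omega>\<in>space M. s \<omega> = (\<lambda>x. \<Sum>i<n. c i * indicator (e i \<omega>) x)"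
    using assms unfolding L0_step_sec_def by blast
  have "AE \<omega> in M. \<forall>i\<in>{..<n}. e i \<omega> \<in> sets (N \<omega>)"
    using e by (intro AE_meas_sec_sets) auto
  then show ?thesis
    using AE_space
  proof eventually_elim
    case (elim \<omega>)
    then have "(\<lambda>x. \<Sum>i<n. c i * indicator (e i \<omega>) x) \<in> borel_measurable (N \<omega>)"
      by (intro borel_measurable_sum borel_measurable_times borel_measurable_const
          borel_measurable_indicator) auto
    with s elim show ?case by simp
  qed
qed

lemma fib_rho0_L0_step_sec_measurable:
  assumes "L0_step_sec M N L s" "L0_step_sec M N L t"
  shows "(\<lambda>\<omega>. fib_rho0 (N \<omega>) (s \<omega>) (t \<omega>)) \<in> borel_measurable (completion M)"
proof -
  obtain I :: "(nat + nat) set" and e h1 h2 where I: "finite I" "\<And>i. i \<in> I \<Longrightarrow> meas_sec M N L (e i)"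
    and s: "\<And>\<omega> x. \<omega> \<in> space M \<Longrightarrow> s \<omega> x = h1 (pattern I e \<omega> x)"
    and t: "\<And>\<omega> x. \<omega> \<in> space M \<Longrightarrow> t \<omega> x = h2 (pattern I e \<omega> x)"
    using L0_step_sec_common_pattern[OF assms] by metis
  let ?H = "\<lambda>S. \<bar>h1 S - h2 S\<bar> / (1 + \<bar>h1 S - h2 S\<bar>)"
  have "(\<lambda>\<omega>. \<integral>x. ?H (pattern I e \<omega> x) \<partial>N \<omega>) \<in> borel_measurable (completion M)"
    using I by (rule integral_pattern_measurable)
  then show ?thesis
    by (rule measurable_cong[THEN iffD1, rotated]) (simp add: fib_rho0_def s t)
qed

lemma L0_step_sec_binop:
  assumes "L0_step_sec M N L s" "L0_step_sec M N L t"
  obtains u where "L0_step_sec M N L u"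
    "\<And>\<omega> x. \<omega> \<in> space M \<Longrightarrow> x \<in> space (N \<omega>) \<Longrightarrow> u \<omega> x = \<Phi> (s \<omega> x) (t \<omega> x)"
proof -
  obtain I :: "(nat + nat) set" and e h1 h2 where I: "finite I" "\<And>i. i \<in> I \<Longrightarrow> meas_sec M N L (e i)"
    and s: "\<And>\<omega> x. \<omega> \<in> space M \<Longrightarrow> s \<omega> x = h1 (pattern I e \<omega> x)"
    and t: "\<And>\<omega> x. \<omega> \<in> space M \<Longrightarrow> t \<omega> x = h2 (pattern I e \<omega> x)"
    using L0_step_sec_common_pattern[OF assms] by blast
  obtain u where u: "L0_step_sec M N L u"
    and u_eq: "\<And>\<omega> x. \<omega> \<in> space M \<Longrightarrow> x \<in> space (N \<omega>) \<Longrightarrow>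
      u \<omega> x = \<Phi> (h1 (pattern I e \<omega> x)) (h2 (pattern I e \<omega> x))"
    using L0_step_sec_pattern[where e=e and H="\<lambda>S. \<Phi> (h1 S) (h2 S)", OF I] by blast
  show ?thesis
  proof (rule that[OF u])
    fix \<omega> x assume "\<omega> \<in> space M" "x \<in> space (N \<omega>)"
    then show "u \<omega> x = \<Phi> (s \<omega> x) (t \<omega> x)"
      using u_eq s t by simp
  qed
qed

lemma L0_step_sec_binop_seq:
  assumes s: "\<And>k. L0_step_sec M N L (s k)" and t: "\<And>k. L0_step_sec M N L (t k)"
  obtains u where "\<And>k. L0_step_sec M N L (u k)"
    "\<And>k \<omega> x. \<omega> \<in> space M \<Longrightarrow> x \<in> space (N \<omega>) \<Longrightarrow> u k \<omega> x = \<Phi> (s k \<omega> x) (t k \<omega> x)"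
proof -
  have "\<forall>k. \<exists>u. L0_step_sec M N L u \<and>
      (\<forall>\<omega>\<in>space M. \<forall>x\<in>space (N \<omega>). u \<omega> x = \<Phi> (s k \<omega> x) (t k \<omega> x))"
  proof
    fix k
    obtain u where "L0_step_sec M N L u"
      "\<And>\<omega> x. \<omega> \<in> space M \<Longrightarrow> x \<in> space (N \<omega>) \<Longrightarrow> u \<omega> x = \<Phi> (s k \<omega> x) (t k \<omega> x)"
      using L0_step_sec_binop[where \<Phi>=\<Phi>, OF s[of k] t[of k]] by blast
    then show "\<exists>u. L0_step_sec M N L u \<and>
        (\<forall>\<omega>\<in>space M. \<forall>x\<in>space (N \<omega>). u \<omega> x = \<Phi> (s k \<omega> x) (t k \<omega> x))"
      by blast
  qed
  then obtain u where u_all: "\<forall>k. L0_step_sec M N L (u k) \<and>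
      (\<forall>\<omega>\<in>space M. \<forall>x\<in>space (N \<omega>). u k \<omega> x = \<Phi> (s k \<omega> x) (t k \<omega> x))"
    by (rule choice[THEN exE])
  with that show ?thesis
    by blast
qed

lemma AE_L0_meas_sec_borel_measurable:
  fixes f :: "nat \<Rightarrow> 'w \<Rightarrow> 'x \<Rightarrow> real"
  assumes "\<And>n. L0_meas_sec M N L (f n)"
  shows "AE \<omega> in M. \<forall>n. f n \<omega> \<in> borel_measurable (N \<omega>)"
  using assms unfolding L0_meas_sec_def by (simp add: AE_all_countable)

lemma fib_rho0_L0_meas_sec_measurable:
  assumes s: "L0_step_sec M N L s" and f: "L0_meas_sec M N L f"
  shows "(\<lambda>\<omega>. fib_rho0 (N \<omega>) (s \<omega>) (f \<omega>)) \<in> borel_measurable (completion M)"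
proof -
  obtain t where f_meas: "AE \<omega> in M. f \<omega> \<in> borel_measurable (N \<omega>)" and t: "\<And>k. L0_step_sec M N L (t k)"
    and lim: "AE \<omega> in M. (\<lambda>k. fib_rho0 (N \<omega>) (t k \<omega>) (f \<omega>)) \<longlonglongrightarrow> 0"
    using f unfolding L0_meas_sec_def by blast
  have t_meas: "AE \<omega> in M. \<forall>k. t k \<omega> \<in> borel_measurable (N \<omega>)"
    using AE_L0_step_sec_borel_measurable[OF t] by (simp add: AE_all_countable)
  show ?thesis
  proof (rule borel_measurable_completion_AE_tendsto)
    show "(\<lambda>\<omega>. fib_rho0 (N \<omega>) (s \<omega>) (t k \<omega>)) \<in> borel_measurable (completion M)" for k
      using s t by (rule fib_rho0_L0_step_sec_measurable)
    show "AE \<omega> in M. (\<lambda>k. fib_rho0 (N \<omega>) (s \<omega>) (t k \<omega>)) \<longlonglongrightarrow> fib_rho0 (N \<omega>) (s \<omega>) (f \<omega>)"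
      using AE_space f_meas t_meas AE_L0_step_sec_borel_measurable[OF s] lim
    proof eventually_elim
      case (elim \<omega>)
      note \<nu> = finite_measure_fibre[OF elim(1)]
      show ?case
      proof (rule Lim_null_comparison[OF always_eventually elim(5), THEN LIM_zero_cancel], intro allI)
        fix k
        have "fib_rho0 (N \<omega>) (s \<omega>) (f \<omega>) \<le> fib_rho0 (N \<omega>) (s \<omega>) (t k \<omega>) + fib_rho0 (N \<omega>) (t k \<omega>) (f \<omega>)"
          "fib_rho0 (N \<omega>) (s \<omega>) (t k \<omega>) \<le> fib_rho0 (N \<omega>) (s \<omega>) (f \<omega>) + fib_rho0 (N \<omega>) (f \<omega>) (t k \<omega>)"
          using elim by (intro fib_rho0_triangle[OF \<nu>]; simp)+
        then show "norm (fib_rho0 (N \<omega>) (s \<omega>) (t k \<omega>) - fib_rho0 (N \<omega>) (s \<omega>) (f \<omega>)) \<le> fib_rho0 (N \<omega>) (t k \<omega>) (f \<omega>)"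
          by (simp add: fib_rho0_commute[of _ "f \<omega>"])
      qed
    qed
  qed
qed

lemma L0_meas_sec_approximants:
  assumes "\<And>n. L0_meas_sec M N L (F n)"
  obtains s where "\<And>n k. L0_step_sec M N L (s n k)"
    "\<And>n. AE \<omega> in M. (\<lambda>k. fib_rho0 (N \<omega>) (s n k \<omega>) (F n \<omega>)) \<longlonglongrightarrow> 0"
proof -
  have "\<forall>n. \<exists>s. (\<forall>k. L0_step_sec M N L (s k)) \<and>
      (AE \<omega> in M. (\<lambda>k. fib_rho0 (N \<omega>) (s k \<omega>) (F n \<omega>)) \<longlonglongrightarrow> 0)"
    using assms unfolding L0_meas_sec_def by blast
  then obtain s where "\<forall>n. (\<forall>k. L0_step_sec M N L (s n k)) \<and>
      (AE \<omega> in M. (\<lambda>k. fib_rho0 (N \<omega>) (s n k \<omega>) (F n \<omega>)) \<longlonglongrightarrow> 0)"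
    by (rule choice[THEN exE])
  with that show ?thesis by blast
qed

lemma L0_meas_sec_AE_limit:
  fixes F :: "nat \<Rightarrow> 'w \<Rightarrow> 'x \<Rightarrow> real"
  assumes F: "\<And>n. L0_meas_sec M N L (F n)"
    and G_meas: "AE \<omega> in M. G \<omega> \<in> borel_measurable (N \<omega>)"
    and lim: "AE \<omega> in M. AE x in N \<omega>. (\<lambda>n. F n \<omega> x) \<longlonglongrightarrow> G \<omega> x"
  shows "L0_meas_sec M N L G"
proof -
  obtain s where s: "\<And>n k. L0_step_sec M N L (s n k)"
    and s_lim: "\<And>n. AE \<omega> in M. (\<lambda>k. fib_rho0 (N \<omega>) (s n k \<omega>) (F n \<omega>)) \<longlonglongrightarrow> 0"
    using L0_meas_sec_approximants[of F, OF F] by blast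
  obtain r \<kappa> where r: "strict_mono r"
    and diag: "AE \<omega> in completion M. (\<lambda>j. fib_rho0 (N \<omega>) (s (r j) (\<kappa> j) \<omega>) (F (r j) \<omega>)) \<longlonglongrightarrow> 0"
  proof (rule AE_tendsto_zero_diagonal[OF finite_measure_completion[OF finite_measure_base]])
    show "(\<lambda>\<omega>. fib_rho0 (N \<omega>) (s n k \<omega>) (F n \<omega>)) \<in> borel_measurable (completion M)" for n k
      using s F by (rule fib_rho0_L0_meas_sec_measurable)
    show "AE \<omega> in completion M. (\<lambda>k. fib_rho0 (N \<omega>) (s n k \<omega>) (F n \<omega>)) \<longlonglongrightarrow> 0" for n
      using s_lim by (simp add: AE_completion_iff)
  qed
  define \<sigma> where "\<sigma> j = s (r j) (\<kappa> j)" for j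
  have F_meas: "AE \<omega> in M. \<forall>n. F n \<omega> \<in> borel_measurable (N \<omega>)"
    using F by (rule AE_L0_meas_sec_borel_measurable)
  have \<sigma>_meas: "AE \<omega> in M. \<forall>j. \<sigma> j \<omega> \<in> borel_measurable (N \<omega>)"
    unfolding \<sigma>_def using AE_L0_step_sec_borel_measurable[OF s] by (simp add: AE_all_countable)
  have "AE \<omega> in M. (\<lambda>j. fib_rho0 (N \<omega>) (\<sigma> j \<omega>) (G \<omega>)) \<longlonglongrightarrow> 0"
    using AE_space diag[unfolded AE_completion_iff] F_meas \<sigma>_meas G_meas lim
  proof eventually_elim
    case (elim \<omega>)
    note \<nu> = finite_measure_fibre[OF elim(1)]
    have "(\<lambda>n. fib_rho0 (N \<omega>) (F n \<omega>) (G \<omega>)) \<longlonglongrightarrow> 0"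
      using elim by (intro fib_rho0_tendsto_zero[OF \<nu>]) auto
    then have FG: "(\<lambda>j. fib_rho0 (N \<omega>) (F (r j) \<omega>) (G \<omega>)) \<longlonglongrightarrow> 0"
      using LIMSEQ_subseq_LIMSEQ[OF _ r] by (simp add: comp_def)
    show ?case
      unfolding \<sigma>_def
    proof (rule fib_rho0_tendsto_zero_trans[OF \<nu> _ _ _ elim(2) FG])
    qed (use elim in \<open>auto simp: \<sigma>_def\<close>)
  qed
  moreover have "L0_step_sec M N L (\<sigma> j)" for j
    unfolding \<sigma>_def by (rule s)
  ultimately show ?thesis
    unfolding L0_meas_sec_def using G_meas by blast
qed

lemma L0_meas_sec_lipschitz:
  fixes \<Phi> :: "real \<Rightarrow> real \<Rightarrow> real"
  assumes f: "L0_meas_sec M N L f" and g: "L0_meas_sec M N L g"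
    and lip: "\<And>a b a' b'. \<bar>\<Phi> a b - \<Phi> a' b'\<bar> \<le> \<bar>a - a'\<bar> + \<bar>b - b'\<bar>"
  shows "L0_meas_sec M N L (\<lambda>\<omega> x. \<Phi> (f \<omega> x) (g \<omega> x))"
proof -
  obtain s where f_meas: "AE \<omega> in M. f \<omega> \<in> borel_measurable (N \<omega>)" and s: "\<And>k. L0_step_sec M N L (s k)"
    and s_lim: "AE \<omega> in M. (\<lambda>k. fib_rho0 (N \<omega>) (s k \<omega>) (f \<omega>)) \<longlonglongrightarrow> 0"
    using f unfolding L0_meas_sec_def by blast
  obtain t where g_meas: "AE \<omega> in M. g \<omega> \<in> borel_measurable (N \<omega>)" and t: "\<And>k. L0_step_sec M N L (t k)"
    and t_lim: "AE \<omega> in M. (\<lambda>k. fib_rho0 (N \<omega>) (t k \<omega>) (g \<omega>)) \<longlonglongrightarrow> 0"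
    using g unfolding L0_meas_sec_def by blast
  obtain u where u: "\<And>k. L0_step_sec M N L (u k)"
    and u_eq: "\<And>k \<omega> x. \<omega> \<in> space M \<Longrightarrow> x \<in> space (N \<omega>) \<Longrightarrow> u k \<omega> x = \<Phi> (s k \<omega> x) (t k \<omega> x)"
    using L0_step_sec_binop_seq[where \<Phi>=\<Phi> and s=s and t=t, OF s t] by blast
  have "AE \<omega> in M. \<forall>k. s k \<omega> \<in> borel_measurable (N \<omega>) \<and> t k \<omega> \<in> borel_measurable (N \<omega>) \<and>
      u k \<omega> \<in> borel_measurable (N \<omega>)"
    using AE_L0_step_sec_borel_measurable[OF s] AE_L0_step_sec_borel_measurable[OF t]
      AE_L0_step_sec_borel_measurable[OF u] by (simp add: AE_all_countable)
  then have "AE \<omega> in M. (\<lambda>k. fib_rho0 (N \<omega>) (u k \<omega>) (\<lambda>x. \<Phi> (f \<omega> x) (g \<omega> x))) \<longlonglongrightarrow> 0"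
    using AE_space f_meas g_meas s_lim t_lim
  proof eventually_elim
    case (elim \<omega>)
    show ?case
      by (rule fib_rho0_binop_tendsto_zero[where a="\<lambda>k. s k \<omega>" and b="\<lambda>k. t k \<omega>",
            OF finite_measure_fibre _ _ _ _ _ lip])
        (use elim u_eq in auto)
  qed
  moreover have "AE \<omega> in M. (\<lambda>x. \<Phi> (f \<omega> x) (g \<omega> x)) \<in> borel_measurable (N \<omega>)"
    using f_meas g_meas by eventually_elim (rule borel_measurable_lipschitz_binop[OF lip])
  ultimately show ?thesis
    unfolding L0_meas_sec_def using u by (intro conjI exI[of _ u]) auto
qed

lemma L0_meas_sec_INF:
  assumes y: "\<And>n. L0_meas_sec M N L (y n)"
    and dec: "AE \<omega> in M. AE x in N \<omega>. \<forall>n. y (Suc n) \<omega> x \<le> y n \<omega> x \<and> 0 \<le> y n \<omega> x"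
  shows "L0_meas_sec M N L (\<lambda>\<omega> x. INF n. y n \<omega> x)"
proof (rule L0_meas_sec_AE_limit[OF y])
  have "AE \<omega> in M. \<forall>n. y n \<omega> \<in> borel_measurable (N \<omega>)"
    using y by (rule AE_L0_meas_sec_borel_measurable)
  then show "AE \<omega> in M. (\<lambda>x. INF n. y n \<omega> x) \<in> borel_measurable (N \<omega>)"
    by eventually_elim (intro borel_measurable_cINF_real, auto)
  show "AE \<omega> in M. AE x in N \<omega>. (\<lambda>n. y n \<omega> x) \<longlonglongrightarrow> (INF n. y n \<omega> x)"
    using dec by (rule AE_AE_mono) (intro decseq_nonneg_INF, auto)
qed

lemma L0_meas_sec_tail_sup:
  assumes D: "\<And>m. L0_meas_sec M N L (D m)"
    and bdd: "AE \<omega> in M. AE x in N \<omega>. bdd_above (range (\<lambda>m. D m \<omega> x))"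
  shows "L0_meas_sec M N L (\<lambda>\<omega> x. tail_sup (\<lambda>m. D m \<omega> x) n)"
proof -
  have window: "L0_meas_sec M N L (\<lambda>\<omega> x. Max ((\<lambda>m. D m \<omega> x) ` {n..n + K}))" for K
  proof (induction K)
    case 0
    then show ?case using D by simp
  next
    case (Suc K)
    have "L0_meas_sec M N L (\<lambda>\<omega> x. max (D (n + Suc K) \<omega> x) (Max ((\<lambda>m. D m \<omega> x) ` {n..n + K})))"
      by (rule L0_meas_sec_lipschitz[OF D Suc.IH]) (simp add: max_def, linarith)
    then show ?case by (simp only: Max_window_Suc)
  qed
  show ?thesis
  proof (rule L0_meas_sec_AE_limit[OF window])
    have "AE \<omega> in M. \<forall>m. D m \<omega> \<in> borel_measurable (N \<omega>)"
      using D by (rule AE_L0_meas_sec_borel_measurable)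
    then show "AE \<omega> in M. (\<lambda>x. tail_sup (\<lambda>m. D m \<omega> x) n) \<in> borel_measurable (N \<omega>)"
      unfolding tail_sup_def by eventually_elim (intro borel_measurable_SUP_real, auto)
    show "AE \<omega> in M. AE x in N \<omega>. (\<lambda>K. Max ((\<lambda>m. D m \<omega> x) ` {n..n + K})) \<longlonglongrightarrow> tail_sup (\<lambda>m. D m \<omega> x) n"
      using bdd by (rule AE_AE_mono) (rule Max_window_tendsto_tail_sup)
  qed
qed

section \<open>Order convergence\<close>

lemma hat_oconv_AE_fib_oconv:
  assumes "hat_oconv M N L fs f"
  shows "AE \<omega> in M. fib_oconv (N \<omega>) (\<lambda>n. fs n \<omega>) (f \<omega>)"
proof -
  obtain y where y_L0: "\<And>n. L0_meas_sec M N L (y n)"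
    and y_dec: "\<forall>n. AE \<omega> in M. AE x in N \<omega>. y (Suc n) \<omega> x \<le> y n \<omega> x"
    and y_inf: "\<forall>k. L0_meas_sec M N L k \<longrightarrow> (\<forall>n. AE \<omega> in M. AE x in N \<omega>. k \<omega> x \<le> y n \<omega> x) \<longrightarrow>
               (AE \<omega> in M. AE x in N \<omega>. k \<omega> x \<le> 0)"
    and y_dom: "\<forall>n. AE \<omega> in M. AE x in N \<omega>. \<bar>fs n \<omega> x - f \<omega> x\<bar> \<le> y n \<omega> x"
    using assms unfolding hat_oconv_def by blast
  have y_meas: "AE \<omega> in M. \<forall>n. y n \<omega> \<in> borel_measurable (N \<omega>)"
    using y_L0 by (rule AE_L0_meas_sec_borel_measurable)
  have "AE \<omega> in M. \<forall>n. (AE x in N \<omega>. y (Suc n) \<omega> x \<le> y n \<omega> x) \<and>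
      (AE x in N \<omega>. \<bar>fs n \<omega> x - f \<omega> x\<bar> \<le> y n \<omega> x)"
    using y_dec y_dom by (simp add: AE_all_countable)
  then have y_dec_dom: "AE \<omega> in M. AE x in N \<omega>. \<forall>n. y (Suc n) \<omega> x \<le> y n \<omega> x \<and> \<bar>fs n \<omega> x - f \<omega> x\<bar> \<le> y n \<omega> x"
    by eventually_elim (simp add: AE_all_countable AE_conj_iff)
  then have y_pointwise: "AE \<omega> in M. AE x in N \<omega>. \<forall>n. y (Suc n) \<omega> x \<le> y n \<omega> x \<and> 0 \<le> y n \<omega> x"
    by (rule AE_AE_mono) (meson abs_ge_zero order_trans)
  have "AE \<omega> in M. AE x in N \<omega>. (INF n. y n \<omega> x) \<le> y n \<omega> x" for n
    using y_pointwise by (rule AE_AE_mono) (intro decseq_nonneg_INF, auto)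
  with y_inf have "AE \<omega> in M. AE x in N \<omega>. (INF n. y n \<omega> x) \<le> 0"
    using L0_meas_sec_INF[of y, OF y_L0 y_pointwise] by blast
  with y_meas y_dec_dom show ?thesis
    by eventually_elim (rule fib_oconvI, auto)
qed

lemma hat_oconv_of_AE_tendsto:
  assumes fs: "\<And>n. L0_meas_sec M N L (fs n)" and g: "L0_meas_sec M N L g"
    and lim: "AE \<omega> in M. AE x in N \<omega>. (\<lambda>n. fs n \<omega> x) \<longlonglongrightarrow> g \<omega> x"
  shows "hat_oconv M N L fs g"
proof -
  define D where "D m \<omega> x = \<bar>fs m \<omega> x - g \<omega> x\<bar>" for m \<omega> x
  define y where "y n \<omega> x = tail_sup (\<lambda>m. D m \<omega> x) n" for n \<omega> x
  have D_conv: "AE \<omega> in M. AE x in N \<omega>. bdd_above (range (\<lambda>m. D m \<omega> x)) \<and> (\<lambda>m. D m \<omega> x) \<longlonglongrightarrow> 0"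
    using lim
  proof (rule AE_AE_mono)
    fix \<omega> x assume "(\<lambda>n. fs n \<omega> x) \<longlonglongrightarrow> g \<omega> x"
    then have lim0: "(\<lambda>m. D m \<omega> x) \<longlonglongrightarrow> 0"
      unfolding D_def by (intro tendsto_rabs_zero LIM_zero)
    then have "bdd_above (range (\<lambda>m. D m \<omega> x))"
      by (intro Bseq_bdd_above convergent_imp_Bseq convergentI)
    then show "bdd_above (range (\<lambda>m. D m \<omega> x)) \<and> (\<lambda>m. D m \<omega> x) \<longlonglongrightarrow> 0"
      using lim0 by blast
  qed
  have y_L0: "L0_meas_sec M N L (y n)" for n
    unfolding y_def
  proof (rule L0_meas_sec_tail_sup)
    show "L0_meas_sec M N L (D m)" for m
      unfolding D_def by (rule L0_meas_sec_lipschitz[OF fs g]) linarith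
    show "AE \<omega> in M. AE x in N \<omega>. bdd_above (range (\<lambda>m. D m \<omega> x))"
      using D_conv by (rule AE_AE_mono) simp
  qed
  show ?thesis
    unfolding hat_oconv_def
  proof (intro exI[of _ y] conjI allI impI)
    show "L0_meas_sec M N L (y n)" for n
      by (rule y_L0)
    show "AE \<omega> in M. AE x in N \<omega>. y (Suc n) \<omega> x \<le> y n \<omega> x" for n
      using D_conv unfolding y_def by (rule AE_AE_mono) (intro tail_sup_Suc_le, simp)
    show "AE \<omega> in M. AE x in N \<omega>. \<bar>fs n \<omega> x - g \<omega> x\<bar> \<le> y n \<omega> x" for n
      using D_conv unfolding y_def by (rule AE_AE_mono) (auto simp: D_def[symmetric] intro!: tail_sup_upper)
    fix k assume "\<forall>n. AE \<omega> in M. AE x in N \<omega>. k \<omega> x \<le> y n \<omega> x"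
    then have "AE \<omega> in M. AE x in N \<omega>. \<forall>n. k \<omega> x \<le> y n \<omega> x"
      by (simp add: AE_all_countable)
    with D_conv have "AE \<omega> in M. AE x in N \<omega>. (\<forall>n. k \<omega> x \<le> y n \<omega> x) \<and> (\<lambda>m. D m \<omega> x) \<longlonglongrightarrow> 0"
      by eventually_elim (auto elim: eventually_elim2)
    then show "AE \<omega> in M. AE x in N \<omega>. k \<omega> x \<le> 0"
      unfolding y_def by (rule AE_AE_mono) (blast intro: le_zero_if_le_tail_sup)
  qed
qed

end

theorem corollary3p3:
  fixes M :: "'w measure" and N :: "'w \<Rightarrow> 'x measure" and L :: "('w \<Rightarrow> 'x set) set"
    and fs :: "nat \<Rightarrow> 'w \<Rightarrow> 'x \<Rightarrow> real"
  assumes mb: "meas_bundle M N L"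
    and fs_meas: "\<And>n. L0_meas_sec M N L (fs n)"
  shows "(\<forall>f. L0_meas_sec M N L f \<longrightarrow> hat_oconv M N L fs f \<longrightarrow>
            (AE \<omega> in M. fib_oconv (N \<omega>) (\<lambda>n. fs n \<omega>) (f \<omega>)))
       \<and> (\<forall>g. (AE \<omega> in M. g \<omega> \<in> borel_measurable (N \<omega>) \<and> fib_oconv (N \<omega>) (\<lambda>n. fs n \<omega>) (g \<omega>)) \<longrightarrow>
            L0_meas_sec M N L g \<and> hat_oconv M N L fs g)"
proof -
  interpret measurable_bundle M N L
    by (rule measurable_bundle.intro[OF mb])
  show ?thesis
  proof (intro conjI allI impI)
    fix f assume "hat_oconv M N L fs f"
    then show "AE \<omega> in M. fib_oconv (N \<omega>) (\<lambda>n. fs n \<omega>) (f \<omega>)"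
      by (rule hat_oconv_AE_fib_oconv)
  next
    fix g assume g: "AE \<omega> in M. g \<omega> \<in> borel_measurable (N \<omega>) \<and> fib_oconv (N \<omega>) (\<lambda>n. fs n \<omega>) (g \<omega>)"
    then have g_meas: "AE \<omega> in M. g \<omega> \<in> borel_measurable (N \<omega>)"
      by eventually_elim simp
    from g have lim: "AE \<omega> in M. AE x in N \<omega>. (\<lambda>n. fs n \<omega> x) \<longlonglongrightarrow> g \<omega> x"
      by eventually_elim (simp add: fib_oconv_AE_tendsto)
    show "L0_meas_sec M N L g"
      using fs_meas g_meas lim by (rule L0_meas_sec_AE_limit)
    then show "hat_oconv M N L fs g"
      using fs_meas lim by (intro hat_oconv_of_AE_tendsto)
  qed
qed

end
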